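(* Let $E$ be an arbitrary graph, $X\subseteq{\rm Reg}(E)$ and $Y={\rm Reg}(E)\setminus X$. Let $A$ be a $\mathbb Z$-graded ring and $\pi:C_K^X(E)\to A$ a graded ring homomorphism such that $\pi(u)\ne0$ for every $u\in E^0$ and $\pi\big(v-\sum_{e\in s^{-1}(v)}ee^*\big)\ne0$ for every $v\in Y$. Then $\pi$ is injective.
   Context: Let $K$ be a field and $E=(E^0,E^1,r,s)$ a directed graph (no countability or finiteness assumptions). A vertex $v$ is regular if $s^{-1}(v)$ is finite and nonempty; ${\rm Reg}(E)$ is the set of regular vertices. Paths are finite sequences of edges $\xi_1\cdots\xi_n$ with $r(\xi_i)=s(\xi_{i+1})$ (vertices are paths of length 0); for a path $\alpha=\alpha_1\cdots\alpha_n$, $\alpha^*=\alpha_n^*\cdots\alpha_1^*$. For $X\subseteq{\rm Reg}(E)$, the relative Cohn path algebra $C_K^X(E)$ is the free $K$-algebra generated by $E^0\cup E^1\cup\{e^*:e\in E^1\}$ subject to: $vw=\delta_{v,w}v$; $s(e)e=er(e)=e$ and $r(e)e^*=e^*s(e)=e^*$; $e^*f=\delta_{e,f}r(e)$; $v=\sum_{e\in s^{-1}(v)}ee^*$ for every $v\in X$. It is $\mathbb Z$-graded with degree-$n$ component spanned by the elements $\alpha\beta^*$ ($\alpha,\beta$ paths, $r(\alpha)=r(\beta)$) with $|\alpha|-|\beta|=n$. *)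

theory Defs
  imports Main
begin

text \<open>Generators of the free algebra: vertices, edges, ghost edges.\<close>
datatype ('v,'e) cgen = Vx 'v | Ed 'e | Gh 'e

text \<open>Noncommutative polynomials over 'k in the generators: coefficient functions
  on words (finitely supported elements are selected by cohn_free below).\<close>
type_synonym ('k,'v,'e) fpoly = "('v,'e) cgen list \<Rightarrow> 'k"

definition pzero :: "('k::field,'v,'e) fpoly" where
  "pzero = (\<lambda>w. 0)"

definition padd :: "('k::field,'v,'e) fpoly \<Rightarrow> ('k,'v,'e) fpoly \<Rightarrow> ('k,'v,'e) fpoly" where
  "padd p q = (\<lambda>w. p w + q w)"

definition psub :: "('k::field,'v,'e) fpoly \<Rightarrow> ('k,'v,'e) fpoly \<Rightarrow> ('k,'v,'e) fpoly" where
  "psub p q = (\<lambda>w. p w - q w)"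

definition psmul :: "'k::field \<Rightarrow> ('k,'v,'e) fpoly \<Rightarrow> ('k,'v,'e) fpoly" where
  "psmul c p = (\<lambda>w. c * p w)"

definition pmul :: "('k::field,'v,'e) fpoly \<Rightarrow> ('k,'v,'e) fpoly \<Rightarrow> ('k,'v,'e) fpoly" where
  "pmul p q = (\<lambda>w. \<Sum>i\<in>{0..length w}. p (take i w) * q (drop i w))"

definition mon :: "('v,'e) cgen list \<Rightarrow> ('k::field,'v,'e) fpoly" where
  "mon u = (\<lambda>w. if w = u then 1 else 0)"

definition psum :: "('i \<Rightarrow> ('k::field,'v,'e) fpoly) \<Rightarrow> 'i set \<Rightarrow> ('k,'v,'e) fpoly" where
  "psum f S = (\<lambda>w. \<Sum>i\<in>S. f i w)"

definition cgraph :: "'v set \<Rightarrow> 'e set \<Rightarrow> ('e \<Rightarrow> 'v) \<Rightarrow> ('e \<Rightarrow> 'v) \<Rightarrow> bool" where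
  "cgraph E0 E1 s r \<longleftrightarrow> (\<forall>e\<in>E1. s e \<in> E0 \<and> r e \<in> E0)"

definition reg_vertices :: "'v set \<Rightarrow> 'e set \<Rightarrow> ('e \<Rightarrow> 'v) \<Rightarrow> 'v set" where
  "reg_vertices E0 E1 s =
     {v\<in>E0. finite {e\<in>E1. s e = v} \<and> {e\<in>E1. s e = v} \<noteq> {}}"

definition gens :: "'v set \<Rightarrow> 'e set \<Rightarrow> ('v,'e) cgen set" where
  "gens E0 E1 = Vx ` E0 \<union> Ed ` E1 \<union> Gh ` E1"

text \<open>The free (non-unital) K-algebra on E0 \<union> E1 \<union> E1*: finitely supported
  polynomials in nonempty words over the generators.\<close>
definition cohn_free :: "'v set \<Rightarrow> 'e set \<Rightarrow> ('k::field,'v,'e) fpoly set" where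
  "cohn_free E0 E1 =
     {p. finite {w. p w \<noteq> 0} \<and> (\<forall>w. p w \<noteq> 0 \<longrightarrow> w \<noteq> [] \<and> set w \<subseteq> gens E0 E1)}"

definition gap_elt :: "'e set \<Rightarrow> ('e \<Rightarrow> 'v) \<Rightarrow> 'v \<Rightarrow> ('k::field,'v,'e) fpoly" where
  "gap_elt E1 s v = psub (mon [Vx v]) (psum (\<lambda>e. mon [Ed e, Gh e]) {e\<in>E1. s e = v})"

definition cohn_rels :: "'v set \<Rightarrow> 'e set \<Rightarrow> ('e \<Rightarrow> 'v) \<Rightarrow> ('e \<Rightarrow> 'v) \<Rightarrow> 'v set
    \<Rightarrow> ('k::field,'v,'e) fpoly set" where
  "cohn_rels E0 E1 s r X =
     {psub (mon [Vx v, Vx w]) (if v = w then mon [Vx v] else pzero) | v w. v \<in> E0 \<and> w \<in> E0}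
   \<union> {psub (mon [Vx (s e), Ed e]) (mon [Ed e]) | e. e \<in> E1}
   \<union> {psub (mon [Ed e, Vx (r e)]) (mon [Ed e]) | e. e \<in> E1}
   \<union> {psub (mon [Vx (r e), Gh e]) (mon [Gh e]) | e. e \<in> E1}
   \<union> {psub (mon [Gh e, Vx (s e)]) (mon [Gh e]) | e. e \<in> E1}
   \<union> {psub (mon [Gh e, Ed f]) (if e = f then mon [Vx (r e)] else pzero) | e f. e \<in> E1 \<and> f \<in> E1}
   \<union> {gap_elt E1 s v | v. v \<in> X}"

text \<open>The two-sided (K-algebra) ideal generated by the relations; C_K^X(E) is
  cohn_free modulo this ideal.\<close>
inductive_set cohn_ideal :: "'v set \<Rightarrow> 'e set \<Rightarrow> ('e \<Rightarrow> 'v) \<Rightarrow> ('e \<Rightarrow> 'v) \<Rightarrow> 'v set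
    \<Rightarrow> ('k::field,'v,'e) fpoly set"
  for E0 E1 s r X where
  zero: "pzero \<in> cohn_ideal E0 E1 s r X"
| gen: "\<lbrakk>q \<in> cohn_rels E0 E1 s r X; set u \<subseteq> gens E0 E1; set w \<subseteq> gens E0 E1\<rbrakk>
        \<Longrightarrow> pmul (pmul (mon u) q) (mon w) \<in> cohn_ideal E0 E1 s r X"
| add: "\<lbrakk>p \<in> cohn_ideal E0 E1 s r X; q \<in> cohn_ideal E0 E1 s r X\<rbrakk>
        \<Longrightarrow> padd p q \<in> cohn_ideal E0 E1 s r X"
| smul: "p \<in> cohn_ideal E0 E1 s r X \<Longrightarrow> psmul c p \<in> cohn_ideal E0 E1 s r X"

fun gdeg :: "('v,'e) cgen \<Rightarrow> int" where
  "gdeg (Vx v) = 0" | "gdeg (Ed e) = 1" | "gdeg (Gh e) = -1"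

definition wdeg :: "('v,'e) cgen list \<Rightarrow> int" where
  "wdeg w = sum_list (map gdeg w)"

definition homogeneous :: "int \<Rightarrow> ('k::field,'v,'e) fpoly \<Rightarrow> bool" where
  "homogeneous n p \<longleftrightarrow> (\<forall>w. p w \<noteq> 0 \<longrightarrow> wdeg w = n)"

definition graded_ring :: "(int \<Rightarrow> 'a::ring set) \<Rightarrow> bool" where
  "graded_ring Agr \<longleftrightarrow>
     (\<forall>n. 0 \<in> Agr n \<and> (\<forall>x\<in>Agr n. \<forall>y\<in>Agr n. x + y \<in> Agr n \<and> - x \<in> Agr n)) \<and>
     (\<forall>m n. \<forall>x\<in>Agr m. \<forall>y\<in>Agr n. x * y \<in> Agr (m + n)) \<and>
     (\<forall>x. \<exists>S c. finite S \<and> (\<forall>n. c n \<in> Agr n) \<and> x = (\<Sum>n\<in>S. c n)) \<and>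
     (\<forall>S c. finite S \<longrightarrow> (\<forall>n\<in>S. c n \<in> Agr n) \<longrightarrow> (\<Sum>n\<in>S. c n) = 0 \<longrightarrow> (\<forall>n\<in>S. c n = 0))"

end

theory Submission
  imports Defs
begin

text \<open>
  Modulo the relations every word in the generators is either zero or a normal monomial
  \<open>\<alpha> v \<beta>\<^sup>*\<close> with \<open>\<alpha>, \<beta>\<close> paths ending at \<open>v\<close>, so every element of the kernel of \<open>\<pi>\<close> is represented
  by a combination \<open>q\<close> of normal monomials, homogeneous because \<open>\<pi>\<close> is graded. Let \<open>m\<close> be the least
  ghost length \<open>|\<beta>|\<close> occurring in \<open>q\<close>. Terms \<open>\<alpha> v \<beta>\<^sup>*\<close> with \<open>|\<beta>| = m\<close> and \<open>v \<in> X\<close> are rewritten by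
  \<open>v = \<Sum> e e\<^sup>*\<close>, which raises their ghost length. For the remaining ones, \<open>v \<alpha>\<^sup>* \<cdot> q \<cdot> \<beta> v\<close> is, by
  homogeneity and minimality of \<open>m\<close>, the coefficient of \<open>\<alpha> v \<beta>\<^sup>*\<close> times \<open>v\<close> plus terms ending in
  ghost edges \<open>f\<^sup>*\<close> with \<open>s(f) = v\<close>. Multiplying the image under \<open>\<pi>\<close> on the right by \<open>\<pi>(v)\<close>,
  \<open>\<pi>(v - \<Sum> e e\<^sup>*)\<close> (\<open>v \<in> Y\<close>) or \<open>\<pi>(f\<^sub>0)\<close> for an unused edge \<open>f\<^sub>0\<close> (\<open>v\<close> an infinite emitter)
  kills these terms but not \<open>\<pi>(v)\<close>, so the coefficient is zero. Hence \<open>m\<close> can be raised until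
  it exceeds every ghost length of \<open>q\<close>, i.e. until \<open>q\<close> is zero modulo the relations.
\<close>

section \<open>Noncommutative polynomials\<close>

lemma take_length_eq_imp_le: "take (length u) w = u \<Longrightarrow> length u \<le> length w"
  by (metis length_take min.bounded_iff order_refl)

lemma padd_apply: "padd p q w = p w + q w" by (simp add: padd_def)
lemma psub_apply: "psub p q w = p w - q w" by (simp add: psub_def)
lemma psmul_apply: "psmul c q w = c * q w" by (simp add: psmul_def)
lemma psum_apply: "psum f S w = (\<Sum>i\<in>S. f i w)" by (simp add: psum_def)
lemma mon_apply: "mon u w = (if w = u then 1 else 0)" by (simp add: mon_def)
lemma pzero_apply: "pzero w = 0" by (simp add: pzero_def)

lemma pmul_mon_left_apply:
  "pmul (mon u) p w = (if take (length u) w = u then p (drop (length u) w) else 0)"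
proof -
  have "pmul (mon u) p w = (\<Sum>i\<in>{0..length w}. if i = length u then
      (if take (length u) w = u then p (drop (length u) w) else 0) else 0)"
    unfolding pmul_def mon_def by (rule sum.cong) (auto simp: min_def split: if_splits)
  then show ?thesis by (auto simp: sum.delta dest: take_length_eq_imp_le)
qed

lemma pmul_mon_right_apply:
  "pmul p (mon u) w = (if length u \<le> length w \<and> drop (length w - length u) w = u
     then p (take (length w - length u) w) else 0)"
proof -
  have "pmul p (mon u) w = (\<Sum>i\<in>{0..length w}. if i = length w - length u then
      (if length u \<le> length w \<and> drop (length w - length u) w = u
       then p (take (length w - length u) w) else 0) else 0)"
    unfolding pmul_def mon_def by (rule sum.cong) auto
  then show ?thesis by (simp add: sum.delta)
qed

lemma pmul_mon_mon: "pmul (mon u) (mon w) = mon (u @ w)"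
  by (rule ext) (simp only: pmul_mon_left_apply, auto simp: mon_def, metis append_take_drop_id)

lemma pmul_mon_assoc_left:
  fixes x y :: "('k::field,'v,'e) fpoly"
  shows "pmul (pmul (mon a) x) y = pmul (mon a) (pmul x y)"
proof (rule ext)
  fix w :: "('v,'e) cgen list"
  let ?n = "length a"
  show "pmul (pmul (mon a) x) y w = pmul (mon a) (pmul x y) w"
  proof (cases "take ?n w = a")
    case False
    have "pmul (pmul (mon a) x) y w = (\<Sum>i\<in>{0..length w}. 0)"
      unfolding pmul_def[of "pmul (mon a) x"]
      by (rule sum.cong) (use False in \<open>auto simp: pmul_mon_left_apply min_def split: if_splits\<close>)
    then show ?thesis using False by (simp add: pmul_mon_left_apply)
  next
    case True
    have le: "?n \<le> length w" using True by (rule take_length_eq_imp_le)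
    have "pmul (pmul (mon a) x) y w = (\<Sum>i\<in>{?n..length w}. x (drop ?n (take i w)) * y (drop i w))"
      unfolding pmul_def[of "pmul (mon a) x"]
      by (rule sum.mono_neutral_cong_right)
        (use True in \<open>auto simp: pmul_mon_left_apply min_def take_take split: if_splits\<close>)
    also have "\<dots> = (\<Sum>j\<in>{0..length w - ?n}. x (drop ?n (take (j + ?n) w)) * y (drop (j + ?n) w))"
      using sum.shift_bounds_cl_nat_ivl[of "\<lambda>i. x (drop ?n (take i w)) * y (drop i w)" 0 ?n "length w - ?n"] le
      by simp
    also have "\<dots> = pmul x y (drop ?n w)"
      unfolding pmul_def by (rule sum.cong) (auto simp: drop_take add.commute)
    finally show ?thesis using True by (simp add: pmul_mon_left_apply)
  qed
qed

lemma pmul_mon_assoc_right: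
  fixes x y :: "('k::field,'v,'e) fpoly"
  shows "pmul (pmul x y) (mon b) = pmul x (pmul y (mon b))"
proof (rule ext)
  fix w :: "('v,'e) cgen list"
  let ?m = "length w - length b"
  show "pmul (pmul x y) (mon b) w = pmul x (pmul y (mon b)) w"
  proof (cases "length b \<le> length w \<and> drop ?m w = b")
    case False
    have "pmul x (pmul y (mon b)) w = (\<Sum>i\<in>{0..length w}. 0)"
      unfolding pmul_def[of x] by (rule sum.cong) (use False in \<open>auto simp: pmul_mon_right_apply\<close>)
    then show ?thesis using False by (simp add: pmul_mon_right_apply[of "pmul x y"]; blast)
  next
    case True
    have "pmul x (pmul y (mon b)) w = (\<Sum>i\<in>{0..?m}. x (take i w) * y (take (?m - i) (drop i w)))"
      unfolding pmul_def[of x]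
      by (rule sum.mono_neutral_cong_right) (use True in \<open>auto simp: pmul_mon_right_apply add.commute\<close>)
    also have "\<dots> = pmul x y (take ?m w)"
      unfolding pmul_def by (rule sum.cong) (auto simp: drop_take min_def split: if_splits)
    finally show ?thesis using True by (simp add: pmul_mon_right_apply)
  qed
qed

lemma pmul_psmul_left: "pmul (psmul a p) q = psmul a (pmul p q)"
  by (rule ext) (simp add: pmul_def psmul_def sum_distrib_left mult.assoc)
lemma pmul_psmul_right: "pmul p (psmul a q) = psmul a (pmul p q)"
  by (rule ext) (simp add: pmul_def psmul_def sum_distrib_left mult.left_commute)
lemma pmul_padd_left: "pmul (padd p q) r = padd (pmul p r) (pmul q r)"
  by (rule ext) (simp add: pmul_def padd_def sum.distrib distrib_right)
lemma pmul_padd_right: "pmul r (padd p q) = padd (pmul r p) (pmul r q)"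
  by (rule ext) (simp add: pmul_def padd_def sum.distrib distrib_left)
lemma pmul_psub_left: "pmul (psub p q) r = psub (pmul p r) (pmul q r)"
  by (rule ext) (simp add: pmul_def psub_def sum_subtractf left_diff_distrib)
lemma pmul_psub_right: "pmul r (psub p q) = psub (pmul r p) (pmul r q)"
  by (rule ext) (simp add: pmul_def psub_def sum_subtractf right_diff_distrib)
lemma pmul_psum_left: "pmul (psum f S) q = psum (\<lambda>i. pmul (f i) q) S"
  unfolding pmul_def psum_def by (rule ext) (simp add: sum_distrib_right, rule sum.swap)
lemma pmul_psum_right: "pmul q (psum f S) = psum (\<lambda>i. pmul q (f i)) S"
  unfolding pmul_def psum_def by (rule ext) (simp add: sum_distrib_left, rule sum.swap)
lemma pmul_pzero_left: "pmul pzero q = pzero"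
  by (rule ext) (simp add: pmul_def pzero_def)
lemma pmul_pzero_right: "pmul q pzero = pzero"
  by (rule ext) (simp add: pmul_def pzero_def)
lemma pmul_mon_Nil_left: "pmul (mon []) p = p"
  by (rule ext) (simp add: pmul_mon_left_apply)
lemma pmul_mon_Nil_right: "pmul p (mon []) = p"
  by (rule ext) (simp add: pmul_mon_right_apply)

lemma psmul_zero [simp]: "psmul 0 p = pzero"
  by (rule ext) (simp add: psmul_def pzero_def)
lemma psmul_one [simp]: "psmul 1 p = p"
  by (rule ext) (simp add: psmul_def)
lemma psmul_pzero [simp]: "psmul c pzero = pzero"
  by (rule ext) (simp add: psmul_def pzero_def)
lemma psmul_psmul: "psmul a (psmul b p) = psmul (a * b) p"
  by (rule ext) (simp add: psmul_def)
lemma psum_empty [simp]: "psum f {} = pzero"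
  by (rule ext) (simp add: psum_def pzero_def)
lemma psum_insert: "finite S \<Longrightarrow> x \<notin> S \<Longrightarrow> psum f (insert x S) = padd (f x) (psum f S)"
  by (rule ext) (simp add: psum_def padd_def)
lemma psum_Sigma:
  "finite A \<Longrightarrow> (\<And>a. a \<in> A \<Longrightarrow> finite (B a)) \<Longrightarrow>
    psum f (Sigma A B) = psum (\<lambda>a. psum (\<lambda>b. f (a, b)) (B a)) A"
  by (rule ext) (simp add: psum_def sum.Sigma)

lemma psum_psmul_mon: "finite {w. p w \<noteq> 0} \<Longrightarrow> psum (\<lambda>w. psmul (p w) (mon w)) {w. p w \<noteq> 0} = p"
  by (rule ext) (auto simp: psum_def psmul_def mon_def if_distrib sum.delta cong: if_cong)

lemma cohn_free_iff: "p \<in> cohn_free E0 E1 \<longleftrightarrow>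
    finite {w. p w \<noteq> 0} \<and> (\<forall>w. p w \<noteq> 0 \<longrightarrow> w \<noteq> [] \<and> set w \<subseteq> gens E0 E1)"
  by (simp add: cohn_free_def)

lemma cohn_free_support_mono:
  assumes "{w. q w \<noteq> 0} \<subseteq> {w. p w \<noteq> 0} \<union> {w. p' w \<noteq> 0}"
    and "p \<in> cohn_free E0 E1" "p' \<in> cohn_free E0 E1"
  shows "q \<in> cohn_free E0 E1"
  using assms unfolding cohn_free_iff by (blast intro: finite_subset)

lemma cohn_free_pzero: "pzero \<in> cohn_free E0 E1"
  by (simp add: cohn_free_iff pzero_def)
lemma cohn_free_padd: "p \<in> cohn_free E0 E1 \<Longrightarrow> q \<in> cohn_free E0 E1 \<Longrightarrow> padd p q \<in> cohn_free E0 E1"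
  by (erule cohn_free_support_mono[rotated]) (auto simp: padd_apply)
lemma cohn_free_psub: "p \<in> cohn_free E0 E1 \<Longrightarrow> q \<in> cohn_free E0 E1 \<Longrightarrow> psub p q \<in> cohn_free E0 E1"
  by (erule cohn_free_support_mono[rotated]) (auto simp: psub_apply)
lemma cohn_free_psmul: "p \<in> cohn_free E0 E1 \<Longrightarrow> psmul c p \<in> cohn_free E0 E1"
  by (rule cohn_free_support_mono[of _ p p]) (auto simp: psmul_apply)
lemma cohn_free_mon: "w \<noteq> [] \<Longrightarrow> set w \<subseteq> gens E0 E1 \<Longrightarrow> mon w \<in> cohn_free E0 E1"
  unfolding cohn_free_iff mon_def by auto
lemma cohn_free_psum: "finite S \<Longrightarrow> (\<And>i. i \<in> S \<Longrightarrow> f i \<in> cohn_free E0 E1) \<Longrightarrow> psum f S \<in> cohn_free E0 E1"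
  by (induction S rule: finite_induct) (auto simp: cohn_free_pzero psum_insert cohn_free_padd)

lemma cohn_free_pmul:
  assumes "p \<in> cohn_free E0 E1" "q \<in> cohn_free E0 E1"
  shows "pmul p q \<in> cohn_free E0 E1"
proof -
  have nonzero_split: "\<exists>i. p (take i w) \<noteq> 0 \<and> q (drop i w) \<noteq> 0" if "pmul p q w \<noteq> 0" for w
    using that unfolding pmul_def by (auto dest: sum.not_neutral_contains_not_neutral)
  have "{w. pmul p q w \<noteq> 0} \<subseteq> (\<lambda>(a,b). a @ b) ` ({w. p w \<noteq> 0} \<times> {w. q w \<noteq> 0})"
  proof
    fix w assume "w \<in> {w. pmul p q w \<noteq> 0}"
    then obtain i where "p (take i w) \<noteq> 0" "q (drop i w) \<noteq> 0" using nonzero_split by blast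
    then show "w \<in> (\<lambda>(a,b). a @ b) ` ({w. p w \<noteq> 0} \<times> {w. q w \<noteq> 0})"
      by (intro image_eqI[of _ _ "(take i w, drop i w)"]) auto
  qed
  moreover have "finite ((\<lambda>(a,b). a @ b) ` ({w. p w \<noteq> 0} \<times> {w. q w \<noteq> 0}))"
    using assms by (simp add: cohn_free_iff)
  ultimately have "finite {w. pmul p q w \<noteq> 0}" by (rule finite_subset)
  moreover have "w \<noteq> [] \<and> set w \<subseteq> gens E0 E1" if nz: "pmul p q w \<noteq> 0" for w
  proof -
    obtain i where "p (take i w) \<noteq> 0" "q (drop i w) \<noteq> 0" using nonzero_split nz by blast
    then have "take i w \<noteq> []" "set (take i w) \<subseteq> gens E0 E1" "set (drop i w) \<subseteq> gens E0 E1"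
      using assms by (auto simp: cohn_free_iff)
    then show ?thesis by (metis append_take_drop_id le_sup_iff set_append take_Nil)
  qed
  ultimately show ?thesis by (simp add: cohn_free_iff)
qed

section \<open>Words, degrees and paths\<close>

abbreviation edges :: "'e list \<Rightarrow> ('v,'e) cgen list" where
  "edges a \<equiv> map Ed a"

abbreviation ghosts :: "'e list \<Rightarrow> ('v,'e) cgen list" where
  "ghosts b \<equiv> map Gh (rev b)"

text \<open>The monomial \<open>\<alpha> \<beta>\<^sup>*\<close> of the paper, with the vertex \<open>r(\<alpha>) = r(\<beta>)\<close> written out in the middle.
  Keeping the vertex makes the triple \<open>(\<alpha>, v, \<beta>)\<close> recoverable from the word, also when both
  paths are empty.\<close>
definition normal_word :: "'e list \<Rightarrow> 'v \<Rightarrow> 'e list \<Rightarrow> ('v,'e) cgen list" where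
  "normal_word a v b = edges a @ Vx v # ghosts b"

lemma normal_word_inj: "normal_word a v b = normal_word a' v' b' \<Longrightarrow> a = a' \<and> v = v' \<and> b = b'"
proof (induction a arbitrary: a')
  case Nil
  then show ?case by (cases a') (auto simp: normal_word_def dest: map_injective simp: inj_def)
next
  case (Cons e a)
  then show ?case by (cases a') (auto simp: normal_word_def)
qed

lemma normal_word_not_Nil: "normal_word a v b \<noteq> []"
  by (simp add: normal_word_def)

lemma wdeg_Nil [simp]: "wdeg [] = 0" by (simp add: wdeg_def)
lemma wdeg_Cons [simp]: "wdeg (g # w) = gdeg g + wdeg w" by (simp add: wdeg_def)
lemma wdeg_append [simp]: "wdeg (u @ w) = wdeg u + wdeg w" by (simp add: wdeg_def)
lemma wdeg_edges [simp]: "wdeg (edges a) = int (length a)" by (induction a) auto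
lemma wdeg_ghosts [simp]: "wdeg (ghosts a) = - int (length a)" by (induction a) auto

lemma wdeg_normal_word: "wdeg (normal_word a v b) = int (length a) - int (length b)"
  by (simp add: normal_word_def)

definition hom_component :: "int \<Rightarrow> ('k::field,'v,'e) fpoly \<Rightarrow> ('k,'v,'e) fpoly" where
  "hom_component d p = (\<lambda>w. if wdeg w = d then p w else 0)"

lemma homogeneous_hom_component: "homogeneous d (hom_component d p)"
  by (simp add: homogeneous_def hom_component_def)

lemma psum_hom_components:
  assumes "finite {w. p w \<noteq> 0}"
  shows "p = psum (\<lambda>d. hom_component d p) (wdeg ` {w. p w \<noteq> 0})"
proof (rule ext)
  fix w
  show "p w = psum (\<lambda>d. hom_component d p) (wdeg ` {w. p w \<noteq> 0}) w"
  proof (cases "p w = 0")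
    case True
    have "psum (\<lambda>d. hom_component d p) (wdeg ` {w. p w \<noteq> 0}) w = 0"
      unfolding psum_apply hom_component_def using True by (intro sum.neutral) auto
    then show ?thesis using True by simp
  next
    case False
    then show ?thesis using assms by (simp add: psum_apply hom_component_def sum.delta')
  qed
qed

lemma graded_ring_sum_eq_0D:
  assumes "graded_ring Agr" "finite S" "\<forall>n\<in>S. c n \<in> Agr n" "(\<Sum>n\<in>S. c n) = 0" "n \<in> S"
  shows "c n = 0"
  using assms unfolding graded_ring_def by blast

fun path_to :: "'e set \<Rightarrow> ('e \<Rightarrow> 'v) \<Rightarrow> ('e \<Rightarrow> 'v) \<Rightarrow> 'e list \<Rightarrow> 'v \<Rightarrow> bool" where
  "path_to E1 s r [] v \<longleftrightarrow> True"
| "path_to E1 s r (e # a) v \<longleftrightarrow>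
     e \<in> E1 \<and> (case a of [] \<Rightarrow> r e = v | f # _ \<Rightarrow> r e = s f) \<and> path_to E1 s r a v"

lemma path_to_snoc: "path_to E1 s r (b @ [e]) u \<longleftrightarrow> path_to E1 s r b (s e) \<and> e \<in> E1 \<and> r e = u"
  by (induction b) (auto split: list.splits)

lemma path_to_edges: "path_to E1 s r a v \<Longrightarrow> set a \<subseteq> E1"
  by (induction a) auto

lemma path_to_appendD:
  "path_to E1 s r (a @ b) v \<Longrightarrow>
     path_to E1 s r a (case b of [] \<Rightarrow> v | f # _ \<Rightarrow> s f) \<and> path_to E1 s r b v"
proof (induction a)
  case Nil then show ?case by simp
next
  case (Cons e a) then show ?case by (cases a; cases b) auto
qed

lemma path_to_drop: "path_to E1 s r a v \<Longrightarrow> path_to E1 s r (drop n a) v"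
  using path_to_appendD[of E1 s r "take n a" "drop n a" v] by simp

lemma path_to_take: "path_to E1 s r a v \<Longrightarrow> \<exists>x. path_to E1 s r (take n a) x"
  using path_to_appendD[of E1 s r "take n a" "drop n a" v] by auto

lemma gens_iff [simp]:
  "Vx x \<in> gens E0 E1 \<longleftrightarrow> x \<in> E0" "Ed e \<in> gens E0 E1 \<longleftrightarrow> e \<in> E1" "Gh e \<in> gens E0 E1 \<longleftrightarrow> e \<in> E1"
  by (auto simp: gens_def)

section \<open>The ideal of relations\<close>

locale cohn_graph =
  fixes E0 :: "'v set" and E1 :: "'e set" and s r :: "'e \<Rightarrow> 'v" and X :: "'v set"
    and K :: "'k::field itself"
  assumes graph: "cgraph E0 E1 s r" and X_regular: "X \<subseteq> reg_vertices E0 E1 s"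
begin

abbreviation \<F> :: "('k,'v,'e) fpoly set" where "\<F> \<equiv> cohn_free E0 E1"
abbreviation \<I> :: "('k,'v,'e) fpoly set" where "\<I> \<equiv> cohn_ideal E0 E1 s r X"
abbreviation \<G> :: "('v,'e) cgen set" where "\<G> \<equiv> gens E0 E1"
abbreviation monom :: "('v,'e) cgen list \<Rightarrow> ('k,'v,'e) fpoly" where "monom w \<equiv> mon w"

definition cong :: "('k,'v,'e) fpoly \<Rightarrow> ('k,'v,'e) fpoly \<Rightarrow> bool" (infix "\<approx>" 50) where
  "p \<approx> q \<longleftrightarrow> psub p q \<in> \<I>"

abbreviation path :: "'e list \<Rightarrow> 'v \<Rightarrow> bool" where "path a v \<equiv> path_to E1 s r a v"

lemma source_in_E0: "e \<in> E1 \<Longrightarrow> s e \<in> E0" and range_in_E0: "e \<in> E1 \<Longrightarrow> r e \<in> E0"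
  using graph by (auto simp: cgraph_def)

lemma ideal_psum: "finite S \<Longrightarrow> (\<And>i. i \<in> S \<Longrightarrow> f i \<in> \<I>) \<Longrightarrow> psum f S \<in> \<I>"
  by (induction S rule: finite_induct) (simp_all add: psum_insert cohn_ideal.zero cohn_ideal.add)

lemma ideal_mult_mon_left: "p \<in> \<I> \<Longrightarrow> set a \<subseteq> \<G> \<Longrightarrow> pmul (monom a) p \<in> \<I>"
proof (induction rule: cohn_ideal.induct)
  case zero then show ?case by (simp add: pmul_pzero_right cohn_ideal.zero)
next
  case (gen q u w)
  have "pmul (monom a) (pmul (pmul (monom u) q) (monom w)) = pmul (pmul (monom (a @ u)) q) (monom w)"
    by (simp only: pmul_mon_assoc_left[symmetric] pmul_mon_mon)
  moreover have "pmul (pmul (monom (a @ u)) q) (monom w) \<in> \<I>" using gen by (intro cohn_ideal.gen) auto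
  ultimately show ?case by simp
next
  case (add p q) then show ?case by (simp add: pmul_padd_right cohn_ideal.add)
next
  case (smul p c) then show ?case by (simp add: pmul_psmul_right cohn_ideal.smul)
qed

lemma ideal_mult_mon_right: "p \<in> \<I> \<Longrightarrow> set a \<subseteq> \<G> \<Longrightarrow> pmul p (monom a) \<in> \<I>"
proof (induction rule: cohn_ideal.induct)
  case zero then show ?case by (simp add: pmul_pzero_left cohn_ideal.zero)
next
  case (gen q u w)
  have "pmul (pmul (pmul (monom u) q) (monom w)) (monom a) = pmul (pmul (monom u) q) (monom (w @ a))"
    by (simp only: pmul_mon_assoc_right pmul_mon_mon)
  moreover have "pmul (pmul (monom u) q) (monom (w @ a)) \<in> \<I>" using gen by (intro cohn_ideal.gen) auto
  ultimately show ?case by simp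
next
  case (add p q) then show ?case by (simp add: pmul_padd_left cohn_ideal.add)
next
  case (smul p c) then show ?case by (simp add: pmul_psmul_left cohn_ideal.smul)
qed

lemma cohn_rels_in_ideal: "q \<in> cohn_rels E0 E1 s r X \<Longrightarrow> q \<in> \<I>"
  using cohn_ideal.gen[of q E0 E1 s r X "[]" "[]"] by (simp add: pmul_mon_Nil_left pmul_mon_Nil_right)

lemma cong_refl [simp]: "p \<approx> p"
proof -
  have "psub p p = pzero" by (rule ext) (simp add: psub_def pzero_def)
  then show ?thesis by (simp add: cong_def cohn_ideal.zero)
qed

lemma cong_sym:
  assumes "p \<approx> q" shows "q \<approx> p"
proof -
  have "psub q p = psmul (-1) (psub p q)" by (rule ext) (simp add: psub_def psmul_def)
  then show ?thesis using assms by (simp add: cong_def cohn_ideal.smul)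
qed

lemma cong_trans [trans]:
  assumes "p \<approx> q" "q \<approx> t" shows "p \<approx> t"
proof -
  have "psub p t = padd (psub p q) (psub q t)" by (rule ext) (simp add: psub_def padd_def)
  then show ?thesis using assms by (simp add: cong_def cohn_ideal.add)
qed

lemma eq_cong_trans [trans]: "p = q \<Longrightarrow> q \<approx> t \<Longrightarrow> p \<approx> t"
  and cong_eq_trans [trans]: "p \<approx> q \<Longrightarrow> q = t \<Longrightarrow> p \<approx> t"
  by simp_all

lemma cong_pzero_iff: "p \<approx> pzero \<longleftrightarrow> p \<in> \<I>"
proof -
  have "psub p pzero = p" by (rule ext) (simp add: psub_def pzero_def)
  then show ?thesis by (simp add: cong_def)
qed

lemma ideal_cong:
  assumes "p \<approx> q" "q \<in> \<I>" shows "p \<in> \<I>"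
proof -
  have "p = padd (psub p q) q" by (rule ext) (simp add: psub_def padd_def)
  then show ?thesis using assms by (metis cong_def cohn_ideal.add)
qed

lemma cong_psmul:
  assumes "p \<approx> q" shows "psmul c p \<approx> psmul c q"
proof -
  have "psub (psmul c p) (psmul c q) = psmul c (psub p q)"
    by (rule ext) (simp add: psub_def psmul_def algebra_simps)
  then show ?thesis using assms by (simp add: cong_def cohn_ideal.smul)
qed

lemma cong_padd:
  assumes "p \<approx> q" "p' \<approx> q'" shows "padd p p' \<approx> padd q q'"
proof -
  have "psub (padd p p') (padd q q') = padd (psub p q) (psub p' q')"
    by (rule ext) (simp add: psub_def padd_def)
  then show ?thesis using assms by (simp add: cong_def cohn_ideal.add)
qed

lemma cong_psum:
  assumes "finite S" "\<And>i. i \<in> S \<Longrightarrow> f i \<approx> g i" shows "psum f S \<approx> psum g S"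
proof -
  have "psub (psum f S) (psum g S) = psum (\<lambda>i. psub (f i) (g i)) S"
    by (rule ext) (simp add: psub_def psum_def sum_subtractf)
  then show ?thesis using assms by (simp add: cong_def ideal_psum)
qed

lemma cong_sandwich: "p \<approx> q \<Longrightarrow> set u \<subseteq> \<G> \<Longrightarrow> set v \<subseteq> \<G> \<Longrightarrow>
    pmul (pmul (monom u) p) (monom v) \<approx> pmul (pmul (monom u) q) (monom v)"
  using ideal_mult_mon_right[OF ideal_mult_mon_left, of "psub p q" u v]
  by (simp add: cong_def pmul_psub_left pmul_psub_right)

lemma cong_mon_sandwich: "monom x \<approx> monom y \<Longrightarrow> set u \<subseteq> \<G> \<Longrightarrow> set v \<subseteq> \<G> \<Longrightarrow>
    monom (u @ x @ v) \<approx> monom (u @ y @ v)"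
  by (drule (2) cong_sandwich) (simp only: pmul_mon_mon append_assoc)

lemma ideal_mon_sandwich: "monom x \<in> \<I> \<Longrightarrow> set u \<subseteq> \<G> \<Longrightarrow> set v \<subseteq> \<G> \<Longrightarrow> monom (u @ x @ v) \<in> \<I>"
  by (drule (1) ideal_mult_mon_left, drule (1) ideal_mult_mon_right) (simp only: pmul_mon_mon append_assoc)

lemma rel_vertex_vertex: "a \<in> E0 \<Longrightarrow> b \<in> E0 \<Longrightarrow>
    monom [Vx a, Vx b] \<approx> (if a = b then monom [Vx a] else pzero)"
  unfolding cong_def by (rule cohn_rels_in_ideal) (unfold cohn_rels_def, blast)
lemma rel_source_edge: "e \<in> E1 \<Longrightarrow> monom [Vx (s e), Ed e] \<approx> monom [Ed e]"
  unfolding cong_def by (rule cohn_rels_in_ideal) (unfold cohn_rels_def, blast)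
lemma rel_edge_range: "e \<in> E1 \<Longrightarrow> monom [Ed e, Vx (r e)] \<approx> monom [Ed e]"
  unfolding cong_def by (rule cohn_rels_in_ideal) (unfold cohn_rels_def, blast)
lemma rel_range_ghost: "e \<in> E1 \<Longrightarrow> monom [Vx (r e), Gh e] \<approx> monom [Gh e]"
  unfolding cong_def by (rule cohn_rels_in_ideal) (unfold cohn_rels_def, blast)
lemma rel_ghost_source: "e \<in> E1 \<Longrightarrow> monom [Gh e, Vx (s e)] \<approx> monom [Gh e]"
  unfolding cong_def by (rule cohn_rels_in_ideal) (unfold cohn_rels_def, blast)
lemma rel_ghost_edge: "e \<in> E1 \<Longrightarrow> f \<in> E1 \<Longrightarrow>
    monom [Gh e, Ed f] \<approx> (if e = f then monom [Vx (r e)] else pzero)"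
  unfolding cong_def by (rule cohn_rels_in_ideal) (unfold cohn_rels_def, blast)
lemma rel_regular: "v \<in> X \<Longrightarrow> monom [Vx v] \<approx> psum (\<lambda>e. monom [Ed e, Gh e]) {e\<in>E1. s e = v}"
  unfolding cong_def by (rule cohn_rels_in_ideal) (unfold cohn_rels_def gap_elt_def, blast)

lemma rel_vertex_idem: "a \<in> E0 \<Longrightarrow> monom [Vx a, Vx a] \<approx> monom [Vx a]"
  using rel_vertex_vertex[of a a] by simp

lemma ideal_vertex_vertex: "a \<in> E0 \<Longrightarrow> b \<in> E0 \<Longrightarrow> a \<noteq> b \<Longrightarrow> monom [Vx a, Vx b] \<in> \<I>"
  using rel_vertex_vertex[of a b] by (simp add: cong_pzero_iff)

lemma ideal_ghost_edge: "e \<in> E1 \<Longrightarrow> f \<in> E1 \<Longrightarrow> e \<noteq> f \<Longrightarrow> monom [Gh e, Ed f] \<in> \<I>"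
  using rel_ghost_edge[of e f] by (simp add: cong_pzero_iff)

lemma ideal_vertex_edge:
  assumes "a \<in> E0" "e \<in> E1" "a \<noteq> s e"
  shows "monom [Vx a, Ed e] \<in> \<I>"
proof -
  have "monom ([Vx a] @ [Vx (s e), Ed e] @ []) \<approx> monom ([Vx a] @ [Ed e] @ [])"
    using assms by (intro cong_mon_sandwich rel_source_edge) auto
  moreover have "monom ([] @ [Vx a, Vx (s e)] @ [Ed e]) \<in> \<I>"
    using assms by (intro ideal_mon_sandwich ideal_vertex_vertex) (auto simp: source_in_E0)
  ultimately show ?thesis by (auto intro: ideal_cong cong_sym)
qed

lemma ideal_ghost_vertex:
  assumes "b \<in> E0" "e \<in> E1" "b \<noteq> s e"
  shows "monom [Gh e, Vx b] \<in> \<I>"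
proof -
  have "monom ([] @ [Gh e, Vx (s e)] @ [Vx b]) \<approx> monom ([] @ [Gh e] @ [Vx b])"
    using assms by (intro cong_mon_sandwich rel_ghost_source) auto
  moreover have "monom ([Gh e] @ [Vx (s e), Vx b] @ []) \<in> \<I>"
    using assms by (intro ideal_mon_sandwich ideal_vertex_vertex) (auto simp: source_in_E0)
  ultimately show ?thesis by (auto intro: ideal_cong cong_sym)
qed

section \<open>Normal form\<close>

definition normal_triple :: "'e list \<Rightarrow> 'v \<Rightarrow> 'e list \<Rightarrow> bool" where
  "normal_triple a v b \<longleftrightarrow> v \<in> E0 \<and> path a v \<and> path b v"

definition normal_words :: "('v,'e) cgen list set" where
  "normal_words = {normal_word a v b | a v b. normal_triple a v b}"

definition normal_poly :: "('k,'v,'e) fpoly \<Rightarrow> bool" where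
  "normal_poly q \<longleftrightarrow> q \<in> \<F> \<and> (\<forall>w. q w \<noteq> 0 \<longrightarrow> w \<in> normal_words)"

definition normalizable :: "('v,'e) cgen list \<Rightarrow> bool" where
  "normalizable w \<longleftrightarrow> monom w \<in> \<I> \<or> (\<exists>a v b. normal_triple a v b \<and> monom w \<approx> monom (normal_word a v b))"

definition path_starts_at :: "'v \<Rightarrow> 'e list \<Rightarrow> 'v \<Rightarrow> bool" where
  "path_starts_at v g u \<longleftrightarrow> (case g of [] \<Rightarrow> u = v | f # _ \<Rightarrow> s f = v)"

lemma edges_in_gens: "path a v \<Longrightarrow> set (edges a) \<subseteq> \<G>"
  using path_to_edges by fastforce

lemma ghosts_in_gens: "path a v \<Longrightarrow> set (ghosts a) \<subseteq> \<G>"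
  using path_to_edges by fastforce

lemma normal_word_in_gens: "normal_triple a v b \<Longrightarrow> set (normal_word a v b) \<subseteq> \<G>"
  by (auto simp: normal_triple_def normal_word_def dest!: path_to_edges)

lemma normal_words_in_gens: "w \<in> normal_words \<Longrightarrow> w \<noteq> [] \<and> set w \<subseteq> \<G>"
  by (auto simp: normal_words_def normal_word_not_Nil dest: normal_word_in_gens)

lemma normal_triple_snoc: "normal_triple a u b \<Longrightarrow> e \<in> E1 \<Longrightarrow> s e = u \<Longrightarrow>
    normal_triple (a @ [e]) (r e) (b @ [e])"
  by (simp add: normal_triple_def path_to_snoc range_in_E0)

lemma cong_mon_append: "monom x \<approx> monom y \<Longrightarrow> set R \<subseteq> \<G> \<Longrightarrow> monom (x @ R) \<approx> monom (y @ R)"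
  using cong_mon_sandwich[of x y "[]" R] by simp

lemma ideal_mon_append: "monom x \<in> \<I> \<Longrightarrow> set R \<subseteq> \<G> \<Longrightarrow> monom (x @ R) \<in> \<I>"
  using ideal_mon_sandwich[of x "[]" R] by simp

lemma normalizable_cong: "monom w \<approx> monom w' \<Longrightarrow> normalizable w' \<Longrightarrow> normalizable w"
  unfolding normalizable_def by (meson cong_trans ideal_cong)

lemma normalizable_normal_word: "normal_triple a v b \<Longrightarrow> normalizable (normal_word a v b)"
  unfolding normalizable_def using cong_refl by blast

lemma vertex_mult_path:
  assumes v: "v \<in> E0" and u: "u \<in> E0" and g: "path g u" and R: "set R \<subseteq> \<G>"
  shows "if path_starts_at v g u then monom (Vx v # edges g @ Vx u # R) \<approx> monom (edges g @ Vx u # R)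
         else monom (Vx v # edges g @ Vx u # R) \<in> \<I>"
proof (cases g)
  case Nil
  show ?thesis
  proof (cases "u = v")
    case True
    have "monom ([Vx v, Vx u] @ R) \<approx> monom ([Vx u] @ R)"
      using rel_vertex_vertex[OF v u] True R by (intro cong_mon_append) auto
    then show ?thesis using Nil True by (simp add: path_starts_at_def)
  next
    case False
    have "monom ([Vx v, Vx u] @ R) \<in> \<I>"
      using ideal_vertex_vertex[OF v u] False R by (intro ideal_mon_append) auto
    then show ?thesis using Nil False by (simp add: path_starts_at_def)
  qed
next
  case (Cons f g')
  have f: "f \<in> E1" and R': "set (edges g' @ Vx u # R) \<subseteq> \<G>"
    using g Cons u R edges_in_gens[OF path_to_drop[OF g, of 1]] by auto
  show ?thesis
  proof (cases "s f = v")
    case True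
    have "monom ([Vx (s f), Ed f] @ (edges g' @ Vx u # R)) \<approx> monom ([Ed f] @ (edges g' @ Vx u # R))"
      using rel_source_edge[OF f] R' by (intro cong_mon_append) auto
    then show ?thesis using Cons True by (simp add: path_starts_at_def)
  next
    case False
    have "monom ([Vx v, Ed f] @ (edges g' @ Vx u # R)) \<in> \<I>"
      using ideal_vertex_edge[OF v f] False R' by (intro ideal_mon_append) auto
    then show ?thesis using Cons False by (simp add: path_starts_at_def)
  qed
qed

lemma path_mult_vertex:
  assumes v: "v \<in> E0" and u: "u \<in> E0" and g: "path g u" and L: "set L \<subseteq> \<G>"
  shows "if path_starts_at v g u then monom (L @ Vx u # ghosts g @ [Vx v]) \<approx> monom (L @ Vx u # ghosts g)
         else monom (L @ Vx u # ghosts g @ [Vx v]) \<in> \<I>"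
proof (cases g)
  case Nil
  show ?thesis
  proof (cases "u = v")
    case True
    have "monom (L @ [Vx u, Vx v] @ []) \<approx> monom (L @ [Vx u] @ [])"
      using rel_vertex_vertex[OF u v] True L by (intro cong_mon_sandwich) auto
    then show ?thesis using Nil True by (simp add: path_starts_at_def)
  next
    case False
    have "monom (L @ [Vx u, Vx v] @ []) \<in> \<I>"
      using ideal_vertex_vertex[OF u v] False L by (intro ideal_mon_sandwich) auto
    then show ?thesis using Nil False by (simp add: path_starts_at_def)
  qed
next
  case (Cons f g')
  have f: "f \<in> E1" and L': "set (L @ Vx u # ghosts g') \<subseteq> \<G>"
    using g Cons u L ghosts_in_gens[OF path_to_drop[OF g, of 1]] by auto
  show ?thesis
  proof (cases "s f = v")
    case True
    have "monom ((L @ Vx u # ghosts g') @ [Gh f, Vx (s f)] @ []) \<approx> monom ((L @ Vx u # ghosts g') @ [Gh f] @ [])"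
      using rel_ghost_source[OF f] L' by (intro cong_mon_sandwich) auto
    then show ?thesis using Cons True by (simp add: path_starts_at_def)
  next
    case False
    have "monom ((L @ Vx u # ghosts g') @ [Gh f, Vx v] @ []) \<in> \<I>"
      using ideal_ghost_vertex[OF v f] False L' by (intro ideal_mon_sandwich) auto
    then show ?thesis using Cons False by (simp add: path_starts_at_def)
  qed
qed

lemma vertex_mult_normal_word:
  assumes x: "x \<in> E0" and abc: "normal_triple a v b"
  shows "normalizable (Vx x # normal_word a v b)"
proof -
  have v: "v \<in> E0" and a: "path a v" and b: "path b v" using abc by (auto simp: normal_triple_def)
  show ?thesis
  proof (cases "path_starts_at x a v")
    case True
    then have "monom (Vx x # normal_word a v b) \<approx> monom (normal_word a v b)"
      using vertex_mult_path[OF x v a ghosts_in_gens[OF b]] by (simp add: normal_word_def)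
    then show ?thesis by (rule normalizable_cong) (rule normalizable_normal_word[OF abc])
  next
    case False
    then show ?thesis using vertex_mult_path[OF x v a ghosts_in_gens[OF b]]
      by (simp add: normal_word_def normalizable_def)
  qed
qed

lemma edge_mult_normal_word:
  assumes e: "e \<in> E1" and abc: "normal_triple a v b"
  shows "normalizable (Ed e # normal_word a v b)"
proof -
  have v: "v \<in> E0" and a: "path a v" and b: "path b v" using abc by (auto simp: normal_triple_def)
  have R: "set (normal_word a v b) \<subseteq> \<G>" using normal_word_in_gens[OF abc] .
  show ?thesis
  proof (cases "path_starts_at (r e) a v")
    case True
    then have "normal_triple (e # a) v b" using abc e by (auto simp: normal_triple_def path_starts_at_def split: list.splits)
    then show ?thesis using normalizable_normal_word by (fastforce simp: normal_word_def)
  next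
    case False
    have "monom (Vx (r e) # normal_word a v b) \<in> \<I>"
      using vertex_mult_path[OF range_in_E0[OF e] v a ghosts_in_gens[OF b]] False
      by (simp add: normal_word_def)
    then have "monom ([Ed e] @ (Vx (r e) # normal_word a v b) @ []) \<in> \<I>"
      using e by (intro ideal_mon_sandwich) auto
    moreover have "monom ([] @ [Ed e] @ normal_word a v b) \<approx> monom ([] @ [Ed e, Vx (r e)] @ normal_word a v b)"
      using cong_sym[OF rel_edge_range[OF e]] R by (intro cong_mon_sandwich) auto
    ultimately show ?thesis by (auto simp: normalizable_def intro: ideal_cong)
  qed
qed

lemma ghost_mult_vertex_ghosts:
  assumes e: "e \<in> E1" and v: "v \<in> E0" and b: "path b v"
  shows "normalizable (Gh e # normal_word [] v b)"
proof -
  have B: "set (ghosts b) \<subseteq> \<G>" using ghosts_in_gens[OF b] .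
  show ?thesis
  proof (cases "s e = v")
    case True
    have "monom ([Gh e, Vx v] @ ghosts b) \<approx> monom ([Gh e] @ ghosts b)"
      using rel_ghost_source[OF e] True B by (intro cong_mon_append) auto
    also have "monom ([Gh e] @ ghosts b) \<approx> monom ([Vx (r e), Gh e] @ ghosts b)"
      using cong_sym[OF rel_range_ghost[OF e]] B by (intro cong_mon_append) auto
    finally have "monom (Gh e # normal_word [] v b) \<approx> monom (normal_word [] (r e) (b @ [e]))"
      by (simp add: normal_word_def)
    moreover have "normal_triple [] (r e) (b @ [e])"
      using range_in_E0[OF e] b True e by (simp add: normal_triple_def path_to_snoc)
    ultimately show ?thesis by (auto simp: normalizable_def)
  next
    case False
    have "monom ([Gh e, Vx v] @ ghosts b) \<in> \<I>"
      using ideal_ghost_vertex[OF v e] False B by (intro ideal_mon_append) auto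
    then show ?thesis by (simp add: normal_word_def normalizable_def)
  qed
qed

lemma ghost_mult_normal_word:
  assumes e: "e \<in> E1" and abc: "normal_triple a v b"
  shows "normalizable (Gh e # normal_word a v b)"
proof -
  have v: "v \<in> E0" and a: "path a v" and b: "path b v" using abc by (auto simp: normal_triple_def)
  show ?thesis
  proof (cases a)
    case Nil
    then show ?thesis using ghost_mult_vertex_ghosts[OF e v b] by simp
  next
    case (Cons f a')
    have f: "f \<in> E1" and a': "path a' v" and R: "set (normal_word a' v b) \<subseteq> \<G>"
      using a Cons v ghosts_in_gens[OF b] edges_in_gens[OF path_to_drop[OF a, of 1]]
      by (auto simp: normal_word_def)
    show ?thesis
    proof (cases "e = f")
      case False
      have "monom ([Gh e, Ed f] @ normal_word a' v b) \<in> \<I>"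
        using ideal_ghost_edge[OF e f False] R by (intro ideal_mon_append) auto
      then show ?thesis using Cons by (simp add: normal_word_def normalizable_def)
    next
      case True
      have "monom ([Gh e, Ed f] @ normal_word a' v b) \<approx> monom ([Vx (r e)] @ normal_word a' v b)"
        using rel_ghost_edge[OF e f] True R by (intro cong_mon_append) auto
      moreover have "path_starts_at (r e) a' v"
        using a Cons True by (auto simp: path_starts_at_def split: list.splits)
      then have "monom (Vx (r e) # normal_word a' v b) \<approx> monom (normal_word a' v b)"
        using vertex_mult_path[OF range_in_E0[OF e] v a' ghosts_in_gens[OF b]] by (simp add: normal_word_def)
      moreover have "normal_triple a' v b" using v a' b by (simp add: normal_triple_def)
      ultimately show ?thesis
        using Cons by (auto simp: normal_word_def normalizable_def intro: cong_trans)
    qed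
  qed
qed

lemma normalizable_gen: "g \<in> \<G> \<Longrightarrow> normalizable [g]"
proof (cases g)
  case (Vx x)
  then show "g \<in> \<G> \<Longrightarrow> ?thesis"
    using normalizable_normal_word[of "[]" x "[]"] by (simp add: normal_triple_def normal_word_def)
next
  case (Ed e)
  show "g \<in> \<G> \<Longrightarrow> ?thesis"
  proof (rule normalizable_cong)
    assume "g \<in> \<G>"
    then have e: "e \<in> E1" using Ed by simp
    show "monom [g] \<approx> monom (normal_word [e] (r e) [])"
      using cong_sym[OF rel_edge_range[OF e]] Ed by (simp add: normal_word_def)
    show "normalizable (normal_word [e] (r e) [])"
      using e by (intro normalizable_normal_word) (simp add: normal_triple_def range_in_E0)
  qed
next
  case (Gh e)
  show "g \<in> \<G> \<Longrightarrow> ?thesis"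
  proof (rule normalizable_cong)
    assume "g \<in> \<G>"
    then have e: "e \<in> E1" using Gh by simp
    show "monom [g] \<approx> monom (normal_word [] (r e) [e])"
      using cong_sym[OF rel_range_ghost[OF e]] Gh by (simp add: normal_word_def)
    show "normalizable (normal_word [] (r e) [e])"
      using e by (intro normalizable_normal_word) (simp add: normal_triple_def range_in_E0)
  qed
qed

lemma normalizable_Cons:
  assumes g: "g \<in> \<G>" and w: "normalizable w"
  shows "normalizable (g # w)"
  using w unfolding normalizable_def[of w]
proof (elim disjE exE conjE)
  assume "monom w \<in> \<I>"
  then have "monom ([g] @ w @ []) \<in> \<I>" using g by (intro ideal_mon_sandwich) auto
  then show "normalizable (g # w)" by (simp add: normalizable_def)
next
  fix a v b assume abc: "normal_triple a v b" and w: "monom w \<approx> monom (normal_word a v b)"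
  show "normalizable (g # w)"
  proof (rule normalizable_cong)
    show "monom (g # w) \<approx> monom (g # normal_word a v b)"
      using cong_mon_sandwich[OF w, of "[g]" "[]"] g by simp
    show "normalizable (g # normal_word a v b)"
      using g abc vertex_mult_normal_word edge_mult_normal_word ghost_mult_normal_word
      by (cases g) (auto simp: gens_def)
  qed
qed

lemma normalizable_word: "w \<noteq> [] \<Longrightarrow> set w \<subseteq> \<G> \<Longrightarrow> normalizable w"
proof (induction w)
  case (Cons g w)
  then show ?case using normalizable_gen normalizable_Cons by (cases "w = []") auto
qed simp

lemma exists_normal_form:
  assumes p: "p \<in> \<F>"
  shows "\<exists>p'. normal_poly p' \<and> p \<approx> p'"
proof -
  let ?S = "{w. p w \<noteq> 0}"
  have fin: "finite ?S" and S: "\<And>w. w \<in> ?S \<Longrightarrow> w \<noteq> [] \<and> set w \<subseteq> \<G>"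
    using p by (auto simp: cohn_free_iff)
  define nf :: "('v,'e) cgen list \<Rightarrow> ('k,'v,'e) fpoly" where
    "nf w = (if monom w \<in> \<I> then pzero else monom (SOME x. x \<in> normal_words \<and> monom w \<approx> monom x))" for w
  have nf: "monom w \<approx> nf w \<and> nf w \<in> \<F> \<and> (\<forall>x. nf w x \<noteq> 0 \<longrightarrow> x \<in> normal_words)" if wS: "w \<in> ?S" for w
  proof (cases "monom w \<in> \<I>")
    case True
    then show ?thesis by (simp add: nf_def cong_pzero_iff cohn_free_pzero pzero_apply)
  next
    case False
    have "normalizable w" using S[OF wS] by (simp add: normalizable_word)
    then obtain a v b where "normal_triple a v b" "monom w \<approx> monom (normal_word a v b)"
      using False unfolding normalizable_def by blast
    then have "\<exists>x. x \<in> normal_words \<and> monom w \<approx> monom x" by (auto simp: normal_words_def)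
    from someI_ex[OF this] show ?thesis
      using False normal_words_in_gens by (auto simp: nf_def cohn_free_mon mon_apply)
  qed
  define p' where "p' = psum (\<lambda>w. psmul (p w) (nf w)) ?S"
  have "p' \<in> \<F>" unfolding p'_def using nf fin by (intro cohn_free_psum cohn_free_psmul) auto
  moreover have "psum (\<lambda>w. psmul (p w) (monom w)) ?S \<approx> p'"
    unfolding p'_def using nf fin by (intro cong_psum cong_psmul) auto
  then have "p \<approx> p'" using psum_psmul_mon[OF fin] by simp
  moreover have "x \<in> normal_words" if nz: "p' x \<noteq> 0" for x
  proof -
    obtain w where "w \<in> ?S" "psmul (p w) (nf w) x \<noteq> 0"
      using nz unfolding p'_def psum_apply by (meson sum.not_neutral_contains_not_neutral)
    then show ?thesis using nf by (auto simp: psmul_apply)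
  qed
  ultimately show ?thesis by (auto simp: normal_poly_def)
qed

section \<open>Sandwiching normal words\<close>

lemma cong_or_ideal_trans:
  assumes "if P then x \<approx> y else x \<in> \<I>" and "if Q then y \<approx> z else y \<in> \<I>"
  shows "if P \<and> Q then x \<approx> z else x \<in> \<I>"
  using assms by (auto split: if_splits intro: cong_trans ideal_cong)

lemma ghosts_edges_cancel:
  "path a v \<Longrightarrow> a \<noteq> [] \<Longrightarrow> set u \<subseteq> \<G> \<Longrightarrow> set w \<subseteq> \<G> \<Longrightarrow>
    monom (u @ ghosts a @ edges a @ w) \<approx> monom (u @ [Vx v] @ w)"
proof (induction a arbitrary: u w)
  case Nil then show ?case by simp
next
  case (Cons e a)
  have e: "e \<in> E1" and a: "path a v" using Cons.prems by auto
  have G: "set (u @ ghosts a) \<subseteq> \<G>" "set (edges a @ w) \<subseteq> \<G>"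
    using Cons.prems ghosts_in_gens[OF a] edges_in_gens[OF a] by auto
  have "monom ((u @ ghosts a) @ [Gh e, Ed e] @ (edges a @ w)) \<approx> monom ((u @ ghosts a) @ [Vx (r e)] @ (edges a @ w))"
    using rel_ghost_edge[OF e e] G by (intro cong_mon_sandwich) auto
  also have "\<dots> \<approx> monom (u @ [Vx v] @ w)"
  proof (cases a)
    case Nil
    then show ?thesis using Cons.prems by simp
  next
    case (Cons f a')
    have f: "f \<in> E1" and "r e = s f" using Cons.prems Cons by auto
    then have "monom ((u @ ghosts a) @ [Vx (r e), Ed f] @ (edges a' @ w)) \<approx> monom ((u @ ghosts a) @ [Ed f] @ (edges a' @ w))"
      using rel_source_edge[OF f] G Cons by (intro cong_mon_sandwich) auto
    also have "monom ((u @ ghosts a) @ [Ed f] @ (edges a' @ w)) \<approx> monom (u @ [Vx v] @ w)"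
      using Cons.IH[OF a] Cons.prems Cons by simp
    finally show ?thesis using Cons by simp
  qed
  finally show ?case by simp
qed

lemma ghosts_edges_mismatch:
  "length a = length c \<Longrightarrow> a \<noteq> c \<Longrightarrow> path a y \<Longrightarrow> path c x \<Longrightarrow> set u \<subseteq> \<G> \<Longrightarrow> set w \<subseteq> \<G> \<Longrightarrow>
    monom (u @ ghosts a @ edges c @ w) \<in> \<I>"
proof (induction a arbitrary: c u w)
  case Nil then show ?case by simp
next
  case (Cons e a)
  then obtain f c' where c: "c = f # c'" by (cases c) auto
  have e: "e \<in> E1" and f: "f \<in> E1" and a: "path a y" and c': "path c' x"
    using Cons.prems c by auto
  have G: "set (u @ ghosts a) \<subseteq> \<G>" "set (edges c' @ w) \<subseteq> \<G>"
    using Cons.prems ghosts_in_gens[OF a] edges_in_gens[OF c'] by auto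
  have split: "monom (u @ ghosts (e # a) @ edges c @ w) = monom ((u @ ghosts a) @ [Gh e, Ed f] @ (edges c' @ w))"
    using c by simp
  show ?case
  proof (cases "e = f")
    case False
    then show ?thesis using ideal_ghost_edge[OF e f False] G by (simp only: split) (rule ideal_mon_sandwich)
  next
    case True
    have lens: "length a = length c'" and ne: "a \<noteq> c'" using Cons.prems c True by auto
    then obtain f' c'' where c'': "c' = f' # c''" by (cases c') auto
    have f': "f' \<in> E1" and "r f = s f'" using Cons.prems c c'' by auto
    have "monom ((u @ ghosts a) @ [Gh e, Ed f] @ (edges c' @ w)) \<approx> monom ((u @ ghosts a) @ [Vx (r e)] @ (edges c' @ w))"
      using rel_ghost_edge[OF e f] True G by (intro cong_mon_sandwich) auto
    also have "\<dots> \<approx> monom (u @ ghosts a @ edges c' @ w)"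
      using cong_mon_sandwich[OF rel_source_edge[OF f'], of "u @ ghosts a" "edges c'' @ w"] G c'' True \<open>r f = s f'\<close>
      by simp
    finally show ?thesis
      using Cons.IH[OF lens ne a c'] Cons.prems by (simp only: split) (erule ideal_cong, simp)
  qed
qed

lemma vertex_ghosts_edges:
  assumes a: "path a v" and c: "path c u" and len: "length a \<le> length c" and v: "v \<in> E0"
    and R: "set R \<subseteq> \<G>"
  shows "if take (length a) c = a then monom (Vx v # ghosts a @ edges c @ R) \<approx> monom (Vx v # edges (drop (length a) c) @ R)
         else monom (Vx v # ghosts a @ edges c @ R) \<in> \<I>"
proof -
  define c1 where "c1 = take (length a) c"
  define c2 where "c2 = drop (length a) c"
  have c12: "c = c1 @ c2" by (simp add: c1_def c2_def)
  obtain x where c1: "path c1 x" using path_to_take[OF c] by (auto simp: c1_def)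
  have R': "set (edges c2 @ R) \<subseteq> \<G>" using edges_in_gens[OF path_to_drop[OF c]] R by (auto simp: c2_def)
  show ?thesis
  proof (cases "c1 = a")
    case True
    show ?thesis
    proof (cases "a = []")
      case False
      have "monom ([Vx v] @ ghosts a @ edges a @ (edges c2 @ R)) \<approx> monom ([Vx v] @ [Vx v] @ (edges c2 @ R))"
        using ghosts_edges_cancel[OF a False, of "[Vx v]"] v R' by simp
      also have "\<dots> \<approx> monom ([Vx v] @ (edges c2 @ R))"
        using cong_mon_sandwich[OF rel_vertex_idem[OF v], of "[]" "edges c2 @ R"] v R' by simp
      finally show ?thesis using True c12 by simp
    qed simp
  next
    case False
    have "length c1 = length a" using len by (simp add: c1_def)
    then have "monom ([Vx v] @ ghosts a @ edges c1 @ (edges c2 @ R)) \<in> \<I>"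
      using ghosts_edges_mismatch[OF _ _ a c1, of "[Vx v]"] False v R' by auto
    then have "monom (Vx v # ghosts a @ edges c @ R) \<in> \<I>" using c12 by simp
    moreover have "take (length a) c \<noteq> a" using False by (simp add: c1_def)
    ultimately show ?thesis by simp
  qed
qed

lemma ghosts_edges_vertex:
  assumes b: "path b v" and d: "path d u" and len: "length b \<le> length d" and v: "v \<in> E0"
    and L: "set L \<subseteq> \<G>"
  shows "if take (length b) d = b then monom (L @ ghosts d @ edges b @ [Vx v]) \<approx> monom (L @ ghosts (drop (length b) d) @ [Vx v])
         else monom (L @ ghosts d @ edges b @ [Vx v]) \<in> \<I>"
proof -
  define d1 where "d1 = take (length b) d"
  define d2 where "d2 = drop (length b) d"
  have d12: "d = d1 @ d2" by (simp add: d1_def d2_def)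
  obtain x where d1: "path d1 x" using path_to_take[OF d] by (auto simp: d1_def)
  have L': "set (L @ ghosts d2) \<subseteq> \<G>" using ghosts_in_gens[OF path_to_drop[OF d]] L by (auto simp: d2_def)
  show ?thesis
  proof (cases "d1 = b")
    case True
    show ?thesis
    proof (cases "b = []")
      case False
      have "monom ((L @ ghosts d2) @ ghosts b @ edges b @ [Vx v]) \<approx> monom ((L @ ghosts d2) @ [Vx v] @ [Vx v])"
        using ghosts_edges_cancel[OF b False, of "L @ ghosts d2"] v L' by simp
      also have "\<dots> \<approx> monom ((L @ ghosts d2) @ [Vx v] @ [])"
        using cong_mon_sandwich[OF rel_vertex_idem[OF v], of "L @ ghosts d2" "[]"] v L' by simp
      finally show ?thesis using True d12 by simp
    qed simp
  next
    case False
    have "length d1 = length b" using len by (simp add: d1_def)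
    then have "monom ((L @ ghosts d2) @ ghosts d1 @ edges b @ [Vx v]) \<in> \<I>"
      using ghosts_edges_mismatch[OF _ _ d1 b, of "L @ ghosts d2"] False v L' by auto
    then have "monom (L @ ghosts d @ edges b @ [Vx v]) \<in> \<I>" using d12 by simp
    moreover have "take (length b) d \<noteq> b" using False by (simp add: d1_def)
    ultimately show ?thesis by simp
  qed
qed

definition sandwich_fits :: "'e list \<Rightarrow> 'v \<Rightarrow> 'e list \<Rightarrow> 'e list \<Rightarrow> 'v \<Rightarrow> 'e list \<Rightarrow> bool" where
  "sandwich_fits a v b c u d \<longleftrightarrow> take (length a) c = a \<and> take (length b) d = b \<and>
     path_starts_at v (drop (length a) c) u \<and> path_starts_at v (drop (length b) d) u"

lemma sandwich_normal_word:
  assumes abc: "normal_triple a v b" and cud: "normal_triple c u d"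
    and la: "length a \<le> length c" and lb: "length b \<le> length d"
  shows "if sandwich_fits a v b c u d
    then monom (Vx v # ghosts a @ normal_word c u d @ edges b @ [Vx v]) \<approx> monom (normal_word (drop (length a) c) u (drop (length b) d))
    else monom (Vx v # ghosts a @ normal_word c u d @ edges b @ [Vx v]) \<in> \<I>"
proof -
  have v: "v \<in> E0" and a: "path a v" and b: "path b v" using abc by (auto simp: normal_triple_def)
  have u: "u \<in> E0" and c: "path c u" and d: "path d u" using cud by (auto simp: normal_triple_def)
  define c' where "c' = drop (length a) c"
  define d' where "d' = drop (length b) d"
  have c': "path c' u" and d': "path d' u" using c d by (simp_all add: c'_def d'_def path_to_drop)
  have R: "set (Vx u # ghosts d @ edges b @ [Vx v]) \<subseteq> \<G>"
    using u v ghosts_in_gens[OF d] edges_in_gens[OF b] by auto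
  have S1: "if take (length a) c = a
    then monom (Vx v # ghosts a @ normal_word c u d @ edges b @ [Vx v]) \<approx> monom (Vx v # edges c' @ Vx u # ghosts d @ edges b @ [Vx v])
    else monom (Vx v # ghosts a @ normal_word c u d @ edges b @ [Vx v]) \<in> \<I>"
    using vertex_ghosts_edges[OF a c la v R] by (simp add: normal_word_def c'_def)
  have S2: "if path_starts_at v c' u
    then monom (Vx v # edges c' @ Vx u # ghosts d @ edges b @ [Vx v]) \<approx> monom (edges c' @ Vx u # ghosts d @ edges b @ [Vx v])
    else monom (Vx v # edges c' @ Vx u # ghosts d @ edges b @ [Vx v]) \<in> \<I>"
    using vertex_mult_path[OF v u c', of "ghosts d @ edges b @ [Vx v]"] R by simp
  have S3: "if take (length b) d = b
    then monom (edges c' @ Vx u # ghosts d @ edges b @ [Vx v]) \<approx> monom ((edges c' @ [Vx u]) @ ghosts d' @ [Vx v])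
    else monom (edges c' @ Vx u # ghosts d @ edges b @ [Vx v]) \<in> \<I>"
    using ghosts_edges_vertex[OF b d lb v, of "edges c' @ [Vx u]"] edges_in_gens[OF c'] u
    by (simp add: d'_def split: if_splits)
  have S4: "if path_starts_at v d' u
    then monom ((edges c' @ [Vx u]) @ ghosts d' @ [Vx v]) \<approx> monom (normal_word c' u d')
    else monom ((edges c' @ [Vx u]) @ ghosts d' @ [Vx v]) \<in> \<I>"
    using path_mult_vertex[OF v u d' edges_in_gens[OF c']] by (simp add: normal_word_def)
  have "sandwich_fits a v b c u d \<longleftrightarrow>
      ((take (length a) c = a \<and> path_starts_at v c' u) \<and> take (length b) d = b) \<and> path_starts_at v d' u"
    by (auto simp: sandwich_fits_def c'_def d'_def)
  with cong_or_ideal_trans[OF cong_or_ideal_trans[OF cong_or_ideal_trans[OF S1 S2] S3] S4]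
  show ?thesis by (simp only: c'_def d'_def)
qed

section \<open>Polynomials in normal form\<close>

definition triple_word :: "'e list \<times> 'v \<times> 'e list \<Rightarrow> ('v,'e) cgen list" where
  "triple_word = (\<lambda>(a, v, b). normal_word a v b)"

definition support_triples :: "('k,'v,'e) fpoly \<Rightarrow> ('e list \<times> 'v \<times> 'e list) set" where
  "support_triples q = {(a, v, b). normal_triple a v b \<and> q (normal_word a v b) \<noteq> 0}"

definition ghost_lengths :: "('k,'v,'e) fpoly \<Rightarrow> nat set" where
  "ghost_lengths q = (\<lambda>(a, v, b). length b) ` support_triples q"

lemma triple_word_inj: "inj triple_word"
  by (rule injI) (auto simp: triple_word_def dest: normal_word_inj)

lemma support_triples_iff: "(a, v, b) \<in> support_triples q \<longleftrightarrow> normal_triple a v b \<and> q (normal_word a v b) \<noteq> 0"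
  by (simp add: support_triples_def)

lemma ghost_lengths_iff: "k \<in> ghost_lengths q \<longleftrightarrow> (\<exists>a v b. (a, v, b) \<in> support_triples q \<and> k = length b)"
  by (force simp: ghost_lengths_def)

lemma support_triples_deg:
  "homogeneous n q \<Longrightarrow> (a, v, b) \<in> support_triples q \<Longrightarrow> int (length a) - int (length b) = n"
  by (auto simp: homogeneous_def support_triples_iff wdeg_normal_word[symmetric])

lemma normal_poly_support_triples:
  assumes "normal_poly q"
  shows "triple_word ` support_triples q = {w. q w \<noteq> 0}"
proof
  show "triple_word ` support_triples q \<subseteq> {w. q w \<noteq> 0}"
    by (auto simp: support_triples_def triple_word_def)
  show "{w. q w \<noteq> 0} \<subseteq> triple_word ` support_triples q"
  proof
    fix w assume "w \<in> {w. q w \<noteq> 0}"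
    then obtain a v b where "normal_triple a v b" "w = normal_word a v b" "q w \<noteq> 0"
      using assms by (auto simp: normal_poly_def normal_words_def)
    then show "w \<in> triple_word ` support_triples q"
      by (intro image_eqI[of _ _ "(a, v, b)"]) (auto simp: support_triples_def triple_word_def)
  qed
qed

lemma normal_poly_finite_support_triples: "normal_poly q \<Longrightarrow> finite (support_triples q)"
  using normal_poly_support_triples[of q] finite_imageD[OF _ inj_on_subset[OF triple_word_inj]]
  by (auto simp: normal_poly_def cohn_free_iff)

lemma normal_poly_expansion:
  assumes "normal_poly q"
  shows "q = psum (\<lambda>t. psmul (q (triple_word t)) (monom (triple_word t))) (support_triples q)"
proof -
  have fin: "finite {w. q w \<noteq> 0}" using assms by (simp add: normal_poly_def cohn_free_iff)
  have "q = psum (\<lambda>w. psmul (q w) (monom w)) {w. q w \<noteq> 0}" using psum_psmul_mon[OF fin] by simp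
  also have "\<dots> = psum (\<lambda>t. psmul (q (triple_word t)) (monom (triple_word t))) (support_triples q)"
    unfolding normal_poly_support_triples[OF assms, symmetric] psum_def
    by (rule ext) (simp add: sum.reindex[OF inj_on_subset[OF triple_word_inj]])
  finally show ?thesis .
qed

lemma normal_poly_psum:
  assumes "finite S" and "\<And>i. i \<in> S \<Longrightarrow> normal_triple (fst (t i)) (fst (snd (t i))) (snd (snd (t i)))"
  shows "normal_poly (psum (\<lambda>i. psmul (c i) (monom (triple_word (t i)))) S)"
proof -
  have words: "triple_word (t i) \<in> normal_words" if "i \<in> S" for i
    using assms(2)[OF that] by (cases "t i") (auto simp: normal_words_def triple_word_def)
  then have "psum (\<lambda>i. psmul (c i) (monom (triple_word (t i)))) S \<in> \<F>"
    using assms(1) normal_words_in_gens by (intro cohn_free_psum cohn_free_psmul cohn_free_mon) auto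
  moreover have "w \<in> normal_words" if nz: "psum (\<lambda>i. psmul (c i) (monom (triple_word (t i)))) S w \<noteq> 0" for w
  proof -
    obtain i where "i \<in> S" "psmul (c i) (monom (triple_word (t i))) w \<noteq> 0"
      using nz unfolding psum_apply by (meson sum.not_neutral_contains_not_neutral)
    then show ?thesis using words by (auto simp: psmul_apply mon_apply split: if_splits)
  qed
  ultimately show ?thesis by (simp add: normal_poly_def)
qed

definition reduct_word :: "'e list \<Rightarrow> 'v \<Rightarrow> 'e list \<Rightarrow> 'e list \<times> 'v \<times> 'e list \<Rightarrow> ('v,'e) cgen list" where
  "reduct_word a v b = (\<lambda>(c, u, d).
     if sandwich_fits a v b c u d then normal_word (drop (length a) c) u (drop (length b) d) else [Vx v])"

definition reduct_coeff :: "('k,'v,'e) fpoly \<Rightarrow> 'e list \<Rightarrow> 'v \<Rightarrow> 'e list \<Rightarrow> 'e list \<times> 'v \<times> 'e list \<Rightarrow> 'k" where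
  "reduct_coeff q a v b = (\<lambda>(c, u, d). if sandwich_fits a v b c u d then q (normal_word c u d) else 0)"

lemma reduct_word_in_gens:
  assumes "normal_triple a v b" "normal_triple c u d"
  shows "reduct_word a v b (c, u, d) \<noteq> [] \<and> set (reduct_word a v b (c, u, d)) \<subseteq> \<G>"
proof -
  have "normal_triple (drop (length a) c) u (drop (length b) d)"
    using assms(2) by (simp add: normal_triple_def path_to_drop)
  then show ?thesis using assms(1) normal_word_in_gens
    by (auto simp: reduct_word_def normal_word_not_Nil normal_triple_def)
qed

lemma sandwich_reduct_cong:
  assumes q: "normal_poly q" and abc: "normal_triple a v b"
    and len: "\<And>c u d. (c, u, d) \<in> support_triples q \<Longrightarrow> length a \<le> length c \<and> length b \<le> length d"
  shows "pmul (pmul (monom (Vx v # ghosts a)) q) (monom (edges b @ [Vx v])) \<approx>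
    psum (\<lambda>t. psmul (reduct_coeff q a v b t) (monom (reduct_word a v b t))) (support_triples q)"
proof -
  have "pmul (pmul (monom (Vx v # ghosts a)) q) (monom (edges b @ [Vx v])) =
      psum (\<lambda>t. psmul (q (triple_word t)) (monom ((Vx v # ghosts a) @ triple_word t @ edges b @ [Vx v])))
        (support_triples q)"
    by (subst normal_poly_expansion[OF q])
      (simp add: pmul_psum_left pmul_psum_right pmul_psmul_left pmul_psmul_right pmul_mon_mon)
  also have "\<dots> \<approx> psum (\<lambda>t. psmul (reduct_coeff q a v b t) (monom (reduct_word a v b t))) (support_triples q)"
  proof (rule cong_psum[OF normal_poly_finite_support_triples[OF q]])
    fix t assume t: "t \<in> support_triples q"
    obtain c u d where [simp]: "t = (c, u, d)" by (cases t)
    have cud: "normal_triple c u d" using t by (simp add: support_triples_iff)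
    have red: "if sandwich_fits a v b c u d
      then monom (Vx v # ghosts a @ normal_word c u d @ edges b @ [Vx v]) \<approx> monom (reduct_word a v b t)
      else monom (Vx v # ghosts a @ normal_word c u d @ edges b @ [Vx v]) \<approx> pzero"
      using sandwich_normal_word[OF abc cud] len[of c u d] t
      by (simp add: reduct_word_def cong_pzero_iff)
    show "psmul (q (triple_word t)) (monom ((Vx v # ghosts a) @ triple_word t @ edges b @ [Vx v])) \<approx>
        psmul (reduct_coeff q a v b t) (monom (reduct_word a v b t))"
    proof (cases "sandwich_fits a v b c u d")
      case True
      then show ?thesis using cong_psmul red by (simp add: reduct_coeff_def triple_word_def)
    next
      case False
      then show ?thesis using cong_psmul[of _ pzero] red by (simp add: reduct_coeff_def triple_word_def)
    qed
  qed
  finally show ?thesis .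
qed

lemma sandwich_fits_vertex_word:
  "sandwich_fits a v b c u d \<Longrightarrow> normal_word (drop (length a) c) u (drop (length b) d) = [Vx v] \<Longrightarrow>
    c = a \<and> u = v \<and> d = b"
  using normal_word_inj[of "drop (length a) c" u "drop (length b) d" "[]" v "[]"]
  by (auto simp: sandwich_fits_def normal_word_def)

text \<open>Equal degrees force \<open>|c| - |a| = |d| - |b|\<close>, so a nonvertex reduct has a nonempty ghost
  part, which ends with the first edge of the part of \<open>d\<close> beyond \<open>b\<close>; that edge leaves \<open>v\<close>.\<close>
lemma sandwich_fits_ghost_end:
  assumes cud: "normal_triple c u d" and fits: "sandwich_fits a v b c u d"
    and deg: "int (length c) - int (length d) = int (length a) - int (length b)"
    and lb: "length b \<le> length d"
    and ne: "normal_word (drop (length a) c) u (drop (length b) d) \<noteq> [Vx v]"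
  defines "f \<equiv> hd (drop (length b) d)"
  shows "\<exists>w. normal_word (drop (length a) c) u (drop (length b) d) = w @ [Gh f] \<and> w \<noteq> [] \<and>
    f \<in> E1 \<and> s f = v \<and> length b < length d"
proof (cases "drop (length b) d")
  case Nil
  then have "drop (length a) c = []" using deg lb by simp
  then show ?thesis using ne Nil fits by (simp add: normal_word_def sandwich_fits_def path_starts_at_def)
next
  case (Cons f' d')
  have "path (drop (length b) d) u" using cud by (simp add: normal_triple_def path_to_drop)
  moreover have "length b < length d" using Cons by (metis drop_eq_Nil list.distinct(1) not_le)
  ultimately show ?thesis
    using Cons fits by (auto simp: f_def normal_word_def sandwich_fits_def path_starts_at_def)
qed

lemma support_triples_length_bounds:
  assumes q: "homogeneous n q" and abc: "(a, v, b) \<in> support_triples q"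
    and low: "\<forall>k\<in>ghost_lengths q. length b \<le> k" and cud: "(c, u, d) \<in> support_triples q"
  shows "length a \<le> length c \<and> length b \<le> length d \<and>
    int (length c) - int (length d) = int (length a) - int (length b)"
proof -
  have "length d \<in> ghost_lengths q" using cud by (auto simp: ghost_lengths_iff)
  then have "length b \<le> length d" using low by blast
  moreover have "int (length c) - int (length d) = int (length a) - int (length b)"
    using support_triples_deg[OF q] abc cud by metis
  ultimately show ?thesis by linarith
qed

lemma reduct_vertex_coeff_sum:
  assumes fin: "finite T" and abc: "(a, v, b) \<in> T" "normal_triple a v b"
  shows "(\<Sum>t\<in>{t\<in>T. reduct_word a v b t = [Vx v]}. reduct_coeff q a v b t) = q (normal_word a v b)"
proof -
  have fits: "sandwich_fits a v b a v b" by (simp add: sandwich_fits_def path_starts_at_def)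
  have "(\<Sum>t\<in>{t\<in>T. reduct_word a v b t = [Vx v]}. reduct_coeff q a v b t) =
      (\<Sum>t\<in>{(a, v, b)}. reduct_coeff q a v b t)"
  proof (rule sum.mono_neutral_right)
    show "{(a, v, b)} \<subseteq> {t\<in>T. reduct_word a v b t = [Vx v]}"
      using abc fits by (simp add: reduct_word_def normal_word_def)
    show "\<forall>t\<in>{t\<in>T. reduct_word a v b t = [Vx v]} - {(a, v, b)}. reduct_coeff q a v b t = 0"
      by (auto simp: reduct_word_def reduct_coeff_def split: if_splits dest: sandwich_fits_vertex_word)
  qed (use fin in simp)
  then show ?thesis using fits by (simp add: reduct_coeff_def)
qed

section \<open>Expansion at vertices of \<open>X\<close>\<close>

lemma finite_out_edges_X: "v \<in> X \<Longrightarrow> finite {e\<in>E1. s e = v}"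
  using X_regular by (auto simp: reg_vertices_def)

lemma normal_word_expand:
  assumes v: "v \<in> X" and abc: "normal_triple a v b"
  shows "monom (normal_word a v b) \<approx> psum (\<lambda>e. monom (normal_word (a @ [e]) (r e) (b @ [e]))) {e\<in>E1. s e = v}"
proof -
  have a: "path a v" and b: "path b v" using abc by (auto simp: normal_triple_def)
  have A: "set (edges a) \<subseteq> \<G>" and B: "set (ghosts b) \<subseteq> \<G>"
    using edges_in_gens[OF a] ghosts_in_gens[OF b] .
  have "pmul (pmul (monom (edges a)) (monom [Vx v])) (monom (ghosts b)) \<approx>
      pmul (pmul (monom (edges a)) (psum (\<lambda>e. monom [Ed e, Gh e]) {e\<in>E1. s e = v})) (monom (ghosts b))"
    using cong_sandwich[OF rel_regular[OF v] A B] .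
  then have "monom (normal_word a v b) \<approx> psum (\<lambda>e. monom (edges a @ [Ed e] @ [Gh e] @ ghosts b)) {e\<in>E1. s e = v}"
    by (simp add: pmul_mon_mon pmul_psum_left pmul_psum_right normal_word_def)
  also have "\<dots> \<approx> psum (\<lambda>e. monom (normal_word (a @ [e]) (r e) (b @ [e]))) {e\<in>E1. s e = v}"
  proof (rule cong_psum[OF finite_out_edges_X[OF v]])
    fix e assume e: "e \<in> {e\<in>E1. s e = v}"
    have "monom ((edges a @ [Ed e]) @ [Gh e] @ ghosts b) \<approx> monom ((edges a @ [Ed e]) @ [Vx (r e), Gh e] @ ghosts b)"
      using cong_sym[OF rel_range_ghost] e A B by (intro cong_mon_sandwich) auto
    then show "monom (edges a @ [Ed e] @ [Gh e] @ ghosts b) \<approx> monom (normal_word (a @ [e]) (r e) (b @ [e]))"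
      by (simp add: normal_word_def)
  qed
  finally show ?thesis .
qed

definition extend_triple :: "'e list \<times> 'v \<times> 'e list \<Rightarrow> 'e \<Rightarrow> 'e list \<times> 'v \<times> 'e list" where
  "extend_triple = (\<lambda>(a, u, b) e. (a @ [e], r e, b @ [e]))"

definition kept_triples :: "('k,'v,'e) fpoly \<Rightarrow> nat \<Rightarrow> ('e list \<times> 'v \<times> 'e list) set" where
  "kept_triples q m = {(a, u, b) \<in> support_triples q. length b \<noteq> m \<or> u \<notin> X}"

definition expanded_triples :: "('k,'v,'e) fpoly \<Rightarrow> nat \<Rightarrow> (('e list \<times> 'v \<times> 'e list) \<times> 'e) set" where
  "expanded_triples q m =
     {((a, u, b), e). (a, u, b) \<in> support_triples q \<and> length b = m \<and> u \<in> X \<and> e \<in> E1 \<and> s e = u}"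

definition expand_at :: "('k,'v,'e) fpoly \<Rightarrow> nat \<Rightarrow> ('k,'v,'e) fpoly" where
  "expand_at q m = padd
     (psum (\<lambda>t. psmul (q (triple_word t)) (monom (triple_word t))) (kept_triples q m))
     (psum (\<lambda>i. psmul (q (triple_word (fst i))) (monom (triple_word (extend_triple (fst i) (snd i)))))
        (expanded_triples q m))"

lemma expanded_triples_Sigma:
  "expanded_triples q m = Sigma (support_triples q - kept_triples q m) (\<lambda>(a, u, b). {e\<in>E1. s e = u})"
  by (auto simp: expanded_triples_def kept_triples_def)

lemma normal_poly_finite_expanded_triples:
  assumes "normal_poly q"
  shows "finite (expanded_triples q m)"
  unfolding expanded_triples_Sigma
  using normal_poly_finite_support_triples[OF assms] finite_out_edges_X
  by (intro finite_SigmaI) (auto simp: kept_triples_def)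

lemma expand_at_cong:
  assumes q: "normal_poly q"
  shows "q \<approx> expand_at q m"
proof -
  let ?T = "support_triples q" and ?K = "kept_triples q m"
  let ?term = "\<lambda>t. psmul (q (triple_word t)) (monom (triple_word t))"
  have fin: "finite ?T" using normal_poly_finite_support_triples[OF q] .
  have K: "?K \<subseteq> ?T" by (auto simp: kept_triples_def)
  have "q = padd (psum ?term ?K) (psum ?term (?T - ?K))"
    by (subst normal_poly_expansion[OF q]) (rule ext, simp add: psum_apply padd_apply sum.subset_diff[OF K fin])
  also have "\<dots> \<approx> expand_at q m"
    unfolding expand_at_def
  proof (rule cong_padd[OF cong_refl])
    have "psum ?term (?T - ?K) \<approx>
        psum (\<lambda>t. psmul (q (triple_word t)) (psum (\<lambda>e. monom (triple_word (extend_triple t e)))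
          ((\<lambda>(a, u, b). {e\<in>E1. s e = u}) t))) (?T - ?K)"
    proof (rule cong_psum)
      fix t assume "t \<in> ?T - ?K"
      then obtain a u b where t: "t = (a, u, b)" "normal_triple a u b" "u \<in> X"
        by (cases t) (auto simp: kept_triples_def support_triples_iff)
      then show "?term t \<approx> psmul (q (triple_word t)) (psum (\<lambda>e. monom (triple_word (extend_triple t e)))
          ((\<lambda>(a, u, b). {e\<in>E1. s e = u}) t))"
        using normal_word_expand[of u a b] by (simp add: cong_psmul triple_word_def extend_triple_def)
    qed (use fin in simp)
    also have "\<dots> = psum (\<lambda>i. psmul (q (triple_word (fst i))) (monom (triple_word (extend_triple (fst i) (snd i)))))
        (expanded_triples q m)"
      unfolding expanded_triples_Sigma using fin finite_out_edges_X
      by (subst psum_Sigma) (auto simp: kept_triples_def psum_def psmul_def sum_distrib_left)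
    finally show "psum ?term (?T - ?K) \<approx> \<dots>" .
  qed
  finally show ?thesis .
qed

lemma normal_triple_extend:
  "((a, u, b), e) \<in> expanded_triples q m \<Longrightarrow> normal_triple (a @ [e]) (r e) (b @ [e])"
  by (auto simp: expanded_triples_def support_triples_iff intro: normal_triple_snoc)

lemma normal_poly_padd:
  assumes "normal_poly p" "normal_poly q"
  shows "normal_poly (padd p q)"
proof -
  have "w \<in> normal_words" if "padd p q w \<noteq> 0" for w
    using that assms by (cases "p w = 0") (auto simp: normal_poly_def padd_apply)
  then show ?thesis using assms by (simp add: normal_poly_def cohn_free_padd)
qed

lemma normal_poly_expand_at:
  assumes q: "normal_poly q"
  shows "normal_poly (expand_at q m)"
proof -
  have "finite (kept_triples q m)"
    by (rule finite_subset[OF _ normal_poly_finite_support_triples[OF q]]) (auto simp: kept_triples_def)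
  then show ?thesis
    unfolding expand_at_def using normal_poly_finite_expanded_triples[OF q]
    by (intro normal_poly_padd normal_poly_psum)
      (auto simp: kept_triples_def support_triples_iff extend_triple_def dest: normal_triple_extend)
qed

lemma expand_at_support:
  assumes "expand_at q m (normal_word c u d) \<noteq> 0"
  shows "(c, u, d) \<in> kept_triples q m \<or> (\<exists>t e. (t, e) \<in> expanded_triples q m \<and> (c, u, d) = extend_triple t e)"
proof (rule ccontr)
  assume none: "\<not> ?thesis"
  have inj: "t = (c, u, d)" if "normal_word c u d = triple_word t" for t
    using that by (cases t) (auto simp: triple_word_def dest!: normal_word_inj)
  have "psum (\<lambda>t. psmul (q (triple_word t)) (monom (triple_word t))) (kept_triples q m) (normal_word c u d) = 0"
    unfolding psum_apply psmul_apply mon_apply using none inj by (auto intro!: sum.neutral)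
  moreover have "psum (\<lambda>i. psmul (q (triple_word (fst i))) (monom (triple_word (extend_triple (fst i) (snd i)))))
      (expanded_triples q m) (normal_word c u d) = 0"
    unfolding psum_apply
  proof (intro sum.neutral ballI)
    fix i assume i: "i \<in> expanded_triples q m"
    then have "normal_word c u d \<noteq> triple_word (extend_triple (fst i) (snd i))"
      using none inj[of "extend_triple (fst i) (snd i)"] by (metis prod.collapse)
    then show "psmul (q (triple_word (fst i))) (monom (triple_word (extend_triple (fst i) (snd i)))) (normal_word c u d) = 0"
      by (simp add: psmul_apply mon_apply)
  qed
  ultimately show False using assms by (simp add: expand_at_def padd_apply)
qed

lemma normal_poly_hom_component: "normal_poly p \<Longrightarrow> normal_poly (hom_component d p)"
  unfolding normal_poly_def cohn_free_iff hom_component_def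
  by (auto elim: finite_subset[rotated])

lemma homogeneous_if_support_triples:
  assumes p: "normal_poly p" and deg: "\<And>c u d. (c, u, d) \<in> support_triples p \<Longrightarrow> int (length c) - int (length d) = n"
  shows "homogeneous n p"
  unfolding homogeneous_def
proof (intro allI impI)
  fix w assume "p w \<noteq> 0"
  then obtain c u d where "(c, u, d) \<in> support_triples p" "w = normal_word c u d"
    using p by (auto simp: normal_poly_def normal_words_def support_triples_iff)
  then show "wdeg w = n" using deg by (simp add: wdeg_normal_word)
qed

lemma support_triples_expand_at:
  assumes "(c, u, d) \<in> support_triples (expand_at q m)"
  shows "(c, u, d) \<in> kept_triples q m \<or>
    (\<exists>a u' b e. (a, u', b) \<in> support_triples q \<and> length b = m \<and> c = a @ [e] \<and> d = b @ [e])"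
  using expand_at_support[of q m c u d] assms
  by (auto simp: support_triples_iff expanded_triples_def extend_triple_def)

end

section \<open>Graded homomorphisms\<close>

locale graded_cohn_hom = cohn_graph E0 E1 s r X K
  for E0 :: "'v set" and E1 :: "'e set" and s r :: "'e \<Rightarrow> 'v" and X :: "'v set"
    and K :: "'k::field itself" +
  fixes Agr :: "int \<Rightarrow> 'a::ring set" and \<phi> :: "('k,'v,'e) fpoly \<Rightarrow> 'a"
  assumes A: "graded_ring Agr"
    and hom_add: "\<forall>p\<in>cohn_free E0 E1. \<forall>q\<in>cohn_free E0 E1. \<phi> (padd p q) = \<phi> p + \<phi> q"
    and hom_mul: "\<forall>p\<in>cohn_free E0 E1. \<forall>q\<in>cohn_free E0 E1. \<phi> (pmul p q) = \<phi> p * \<phi> q"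
    and hom_rel: "\<forall>p\<in>cohn_ideal E0 E1 s r X. \<phi> p = 0"
    and graded: "\<forall>n. \<forall>p\<in>cohn_free E0 E1. homogeneous n p \<longrightarrow> \<phi> p \<in> Agr n"
    and vert: "\<forall>u\<in>E0. \<phi> (mon [Vx u]) \<noteq> 0"
    and Y: "\<forall>v\<in>reg_vertices E0 E1 s - X. \<phi> (gap_elt E1 s v) \<noteq> 0"
begin

lemma phi_pzero: "\<phi> pzero = 0"
proof -
  have "padd pzero pzero = pzero" by (rule ext) (simp add: padd_def pzero_def)
  then have "\<phi> pzero = \<phi> pzero + \<phi> pzero" using hom_add cohn_free_pzero by metis
  then show ?thesis by simp
qed

lemma phi_psum: "finite S \<Longrightarrow> (\<And>i. i \<in> S \<Longrightarrow> f i \<in> \<F>) \<Longrightarrow> \<phi> (psum f S) = (\<Sum>i\<in>S. \<phi> (f i))"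
proof (induction S rule: finite_induct)
  case empty then show ?case by (simp add: phi_pzero)
next
  case (insert x S)
  then have "psum f S \<in> \<F>" by (intro cohn_free_psum) auto
  then show ?case using insert hom_add by (simp add: psum_insert)
qed

lemma phi_psub:
  assumes p: "p \<in> \<F>" and q: "q \<in> \<F>"
  shows "\<phi> (psub p q) = \<phi> p - \<phi> q"
proof -
  have "p = padd (psub p q) q" by (rule ext) (simp add: psub_def padd_def)
  then have "\<phi> p = \<phi> (psub p q) + \<phi> q" using hom_add cohn_free_psub[OF p q] q by metis
  then show ?thesis by (simp add: algebra_simps)
qed

lemma phi_cong: "p \<in> \<F> \<Longrightarrow> q \<in> \<F> \<Longrightarrow> p \<approx> q \<Longrightarrow> \<phi> p = \<phi> q"
  using phi_psub hom_rel by (fastforce simp: cong_def)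

lemma phi_mon_ideal: "monom w \<in> \<I> \<Longrightarrow> \<phi> (monom w) = 0"
  using hom_rel by blast

lemma phi_mon_cong: "w \<noteq> [] \<Longrightarrow> set w \<subseteq> \<G> \<Longrightarrow> w' \<noteq> [] \<Longrightarrow> set w' \<subseteq> \<G> \<Longrightarrow>
    monom w \<approx> monom w' \<Longrightarrow> \<phi> (monom w) = \<phi> (monom w')"
  by (rule phi_cong) (auto simp: cohn_free_mon)

lemma phi_psmul_mon_append:
  assumes "u \<noteq> []" "w \<noteq> []" "set u \<subseteq> \<G>" "set w \<subseteq> \<G>"
  shows "\<phi> (psmul c (monom (u @ w))) = \<phi> (psmul c (monom u)) * \<phi> (monom w)"
proof -
  have "psmul c (monom (u @ w)) = pmul (psmul c (monom u)) (monom w)"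
    by (simp add: pmul_psmul_left pmul_mon_mon)
  then show ?thesis using assms hom_mul by (simp add: cohn_free_psmul cohn_free_mon)
qed

lemma phi_mon_append: "u \<noteq> [] \<Longrightarrow> w \<noteq> [] \<Longrightarrow> set u \<subseteq> \<G> \<Longrightarrow> set w \<subseteq> \<G> \<Longrightarrow>
    \<phi> (monom (u @ w)) = \<phi> (monom u) * \<phi> (monom w)"
  using phi_psmul_mon_append[of u w 1] by simp

lemma phi_vertex_idem: "x \<in> E0 \<Longrightarrow> \<phi> (monom [Vx x]) * \<phi> (monom [Vx x]) = \<phi> (monom [Vx x])"
  using phi_mon_append[of "[Vx x]" "[Vx x]"] phi_mon_cong[OF _ _ _ _ rel_vertex_idem] by simp

text \<open>\<open>\<phi>\<close> is only additive, not \<open>K\<close>-linear, so scalars are cancelled through the idempotent \<open>x\<close>.\<close>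
lemma phi_scaled_vertex_cancel:
  assumes x: "x \<in> E0" and nz: "\<phi> (monom [Vx x]) * t \<noteq> 0"
    and z: "\<phi> (psmul c (monom [Vx x])) * t = 0"
  shows "c = 0"
proof (rule ccontr)
  assume c: "c \<noteq> 0"
  have x': "monom [Vx x] \<in> \<F>" using x by (intro cohn_free_mon) auto
  have "pmul (psmul (inverse c) (monom [Vx x])) (psmul c (monom [Vx x])) = monom [Vx x, Vx x]"
    using c by (simp add: pmul_psmul_left pmul_psmul_right psmul_psmul pmul_mon_mon)
  then have "\<phi> (psmul (inverse c) (monom [Vx x])) * \<phi> (psmul c (monom [Vx x])) = \<phi> (monom [Vx x, Vx x])"
    using x' hom_mul by (metis cohn_free_psmul)
  also have "\<dots> = \<phi> (monom [Vx x])" using x by (intro phi_mon_cong rel_vertex_idem) auto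
  finally have "\<phi> (monom [Vx x]) * t = \<phi> (psmul (inverse c) (monom [Vx x])) * (\<phi> (psmul c (monom [Vx x])) * t)"
    by (simp add: mult.assoc[symmetric])
  with z nz show False by simp
qed

lemma coefficient_vanishes_under_annihilator:
  assumes fin: "finite S" and h: "\<And>i. i \<in> S \<Longrightarrow> h i \<noteq> [] \<and> set (h i) \<subseteq> \<G>"
    and z: "\<phi> (psum (\<lambda>i. psmul (a i) (monom (h i))) S) = 0" and x: "x \<in> E0"
    and ends: "\<And>i. i \<in> S \<Longrightarrow> a i \<noteq> 0 \<Longrightarrow> h i \<noteq> [Vx x] \<Longrightarrow>
       \<exists>w g. h i = w @ [g] \<and> w \<noteq> [] \<and> \<phi> (monom [g]) * t = 0"
    and nz: "\<phi> (monom [Vx x]) * t \<noteq> 0"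
  shows "(\<Sum>i\<in>{i\<in>S. h i = [Vx x]}. a i) = 0"
proof (rule phi_scaled_vertex_cancel[OF x nz])
  let ?S = "{i\<in>S. h i = [Vx x]}"
  have free: "psmul (a i) (monom (h i)) \<in> \<F>" if "i \<in> S" for i
    using h[OF that] by (intro cohn_free_psmul cohn_free_mon) auto
  have killed: "\<phi> (psmul (a i) (monom (h i))) * t = 0" if "i \<in> S - ?S" for i
  proof (cases "a i = 0")
    case True then show ?thesis by (simp add: phi_pzero)
  next
    case False
    then obtain w g where g: "h i = w @ [g]" "w \<noteq> []" "\<phi> (monom [g]) * t = 0"
      using ends \<open>i \<in> S - ?S\<close> by blast
    have "\<phi> (psmul (a i) (monom (h i))) = \<phi> (psmul (a i) (monom w)) * \<phi> (monom [g])"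
      using g h[of i] \<open>i \<in> S - ?S\<close> by (simp add: phi_psmul_mon_append)
    then show ?thesis using g by (simp add: mult.assoc)
  qed
  have "0 = \<phi> (psum (\<lambda>i. psmul (a i) (monom (h i))) S) * t" using z by simp
  also have "\<dots> = (\<Sum>i\<in>S. \<phi> (psmul (a i) (monom (h i))) * t)"
    using phi_psum[OF fin free] by (simp add: sum_distrib_right)
  also have "\<dots> = (\<Sum>i\<in>?S. \<phi> (psmul (a i) (monom [Vx x])) * t)"
    using killed by (intro sum.mono_neutral_cong_right[OF fin]) auto
  also have "\<dots> = \<phi> (psum (\<lambda>i. psmul (a i) (monom [Vx x])) ?S) * t"
    using fin x by (subst phi_psum) (auto simp: sum_distrib_right intro!: cohn_free_psmul cohn_free_mon)
  also have "psum (\<lambda>i. psmul (a i) (monom [Vx x])) ?S = psmul (\<Sum>i\<in>?S. a i) (monom [Vx x])"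
    by (rule ext) (simp add: psum_def psmul_def sum_distrib_right)
  finally show "\<phi> (psmul (\<Sum>i\<in>?S. a i) (monom [Vx x])) * t = 0" by simp
qed

lemma phi_gap_elt:
  assumes v: "v \<in> reg_vertices E0 E1 s"
  shows "\<phi> (gap_elt E1 s v) = \<phi> (monom [Vx v]) - (\<Sum>e\<in>{e\<in>E1. s e = v}. \<phi> (monom [Ed e, Gh e]))"
proof -
  have fin: "finite {e\<in>E1. s e = v}" and "v \<in> E0" using v by (auto simp: reg_vertices_def)
  have free: "monom [Ed e, Gh e] \<in> \<F>" if "e \<in> {e\<in>E1. s e = v}" for e
    using that by (intro cohn_free_mon) auto
  have "\<phi> (gap_elt E1 s v) = \<phi> (monom [Vx v]) - \<phi> (psum (\<lambda>e. monom [Ed e, Gh e]) {e\<in>E1. s e = v})"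
    unfolding gap_elt_def using \<open>v \<in> E0\<close> fin free by (intro phi_psub cohn_free_mon cohn_free_psum) auto
  then show ?thesis using phi_psum[OF fin free] by simp
qed

lemma phi_gap_elt_annihilates_ghosts:
  assumes v: "v \<in> reg_vertices E0 E1 s" and f: "f \<in> E1" "s f = v"
  shows "\<phi> (monom [Gh f]) * \<phi> (gap_elt E1 s v) = 0"
proof -
  let ?S = "{e\<in>E1. s e = v}"
  have fin: "finite ?S" and "v \<in> E0" using v by (auto simp: reg_vertices_def)
  have "\<phi> (monom [Gh f]) * \<phi> (monom [Vx v]) = \<phi> (monom [Gh f])"
    using phi_mon_append[of "[Gh f]" "[Vx v]"] phi_mon_cong[OF _ _ _ _ rel_ghost_source[OF f(1)]] f \<open>v \<in> E0\<close>
    by simp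
  moreover have "\<phi> (monom [Gh f]) * \<phi> (monom [Ed e, Gh e]) = (if e = f then \<phi> (monom [Gh f]) else 0)"
    if e: "e \<in> ?S" for e
  proof -
    have "\<phi> (monom [Gh f]) * \<phi> (monom [Ed e, Gh e]) = \<phi> (monom ([Gh f] @ [Ed e, Gh e]))"
      using f e by (intro phi_mon_append[symmetric]) auto
    also have "\<dots> = (if e = f then \<phi> (monom [Gh f]) else 0)"
    proof (cases "e = f")
      case True
      have "monom ([Gh f, Ed f] @ [Gh f]) \<approx> monom ([Vx (r f)] @ [Gh f])"
        using rel_ghost_edge[OF f(1) f(1)] f by (intro cong_mon_append) auto
      also have "monom ([Vx (r f)] @ [Gh f]) \<approx> monom [Gh f]" using rel_range_ghost[OF f(1)] by simp
      finally show ?thesis using True f range_in_E0 by (simp add: phi_mon_cong)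
    next
      case False
      have "monom ([Gh f, Ed e] @ [Gh e]) \<in> \<I>"
        using ideal_ghost_edge[of f e] False f e by (intro ideal_mon_append) auto
      then show ?thesis using False by (simp add: phi_mon_ideal)
    qed
    finally show ?thesis .
  qed
  ultimately show ?thesis
    using phi_gap_elt[OF v] fin f by (simp add: right_diff_distrib sum_distrib_left sum.delta)
qed

lemma phi_vertex_gap_elt:
  assumes v: "v \<in> reg_vertices E0 E1 s"
  shows "\<phi> (monom [Vx v]) * \<phi> (gap_elt E1 s v) = \<phi> (gap_elt E1 s v)"
proof -
  have "v \<in> E0" using v by (auto simp: reg_vertices_def)
  have "\<phi> (monom [Vx v]) * \<phi> (monom [Ed e, Gh e]) = \<phi> (monom [Ed e, Gh e])" if e: "e \<in> E1" "s e = v" for e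
  proof -
    have "monom ([Vx (s e), Ed e] @ [Gh e]) \<approx> monom ([Ed e] @ [Gh e])"
      using rel_source_edge[OF e(1)] e by (intro cong_mon_append) auto
    then have "monom [Vx v, Ed e, Gh e] \<approx> monom [Ed e, Gh e]" using e by simp
    then have "\<phi> (monom [Vx v, Ed e, Gh e]) = \<phi> (monom [Ed e, Gh e])"
      by (rule phi_mon_cong[rotated 4]) (use e \<open>v \<in> E0\<close> in auto)
    then show ?thesis using phi_mon_append[of "[Vx v]" "[Ed e, Gh e]"] e \<open>v \<in> E0\<close> by simp
  qed
  then show ?thesis
    using phi_gap_elt[OF v] phi_vertex_idem[OF \<open>v \<in> E0\<close>] by (simp add: right_diff_distrib sum_distrib_left)
qed

lemma phi_edge_annihilates_other_ghosts:
  "f \<in> E1 \<Longrightarrow> f0 \<in> E1 \<Longrightarrow> f \<noteq> f0 \<Longrightarrow> \<phi> (monom [Gh f]) * \<phi> (monom [Ed f0]) = 0"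
  using phi_mon_append[of "[Gh f]" "[Ed f0]"] ideal_ghost_edge[of f f0] by (simp add: phi_mon_ideal)

lemma phi_vertex_edge_nonzero:
  assumes f0: "f0 \<in> E1"
  shows "\<phi> (monom [Vx (s f0)]) * \<phi> (monom [Ed f0]) \<noteq> 0"
proof -
  have "\<phi> (monom [Vx (s f0), Ed f0]) = \<phi> (monom [Ed f0])"
    by (rule phi_mon_cong[OF _ _ _ _ rel_source_edge[OF f0]]) (use f0 source_in_E0 in auto)
  then have "\<phi> (monom [Vx (s f0)]) * \<phi> (monom [Ed f0]) = \<phi> (monom [Ed f0])"
    using phi_mon_append[of "[Vx (s f0)]" "[Ed f0]"] f0 source_in_E0 by simp
  moreover have "\<phi> (monom [Gh f0, Ed f0]) = \<phi> (monom [Vx (r f0)])"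
    by (rule phi_mon_cong) (use rel_ghost_edge[OF f0 f0] f0 range_in_E0 in auto)
  then have "\<phi> (monom [Gh f0]) * \<phi> (monom [Ed f0]) = \<phi> (monom [Vx (r f0)])"
    using phi_mon_append[of "[Gh f0]" "[Ed f0]"] f0 by simp
  ultimately show ?thesis using vert range_in_E0[OF f0] by auto
qed

text \<open>The annihilator is \<open>\<phi> v\<close> if no ghost has to be killed, \<open>\<phi> (v - \<Sum> e e\<^sup>*)\<close> if \<open>v \<in> Y\<close>, and
  \<open>\<phi> f\<^sub>0\<close> for an edge \<open>f\<^sub>0 \<notin> G\<close> if \<open>v\<close> is an infinite emitter.\<close>
lemma vertex_annihilator:
  assumes v: "v \<in> E0" and G: "finite G" "G \<subseteq> {e\<in>E1. s e = v}" and GX: "G \<noteq> {} \<Longrightarrow> v \<notin> X"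
  shows "\<exists>t. (\<forall>f\<in>G. \<phi> (monom [Gh f]) * t = 0) \<and> \<phi> (monom [Vx v]) * t \<noteq> 0"
proof (cases "G = {}")
  case True
  have "\<phi> (monom [Vx v]) * \<phi> (monom [Vx v]) \<noteq> 0" using phi_vertex_idem[OF v] vert v by simp
  then show ?thesis using True by blast
next
  case False
  show ?thesis
  proof (cases "v \<in> reg_vertices E0 E1 s")
    case True
    have "\<forall>f\<in>G. \<phi> (monom [Gh f]) * \<phi> (gap_elt E1 s v) = 0"
      using phi_gap_elt_annihilates_ghosts[OF True] G(2) by blast
    moreover have "\<phi> (monom [Vx v]) * \<phi> (gap_elt E1 s v) \<noteq> 0"
      using phi_vertex_gap_elt[OF True] Y True GX[OF False] by simp
    ultimately show ?thesis by blast
  next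
    case False
    have "{e\<in>E1. s e = v} \<noteq> {}" using \<open>G \<noteq> {}\<close> G(2) by blast
    then have "infinite {e\<in>E1. s e = v}" using False v unfolding reg_vertices_def by blast
    then have "infinite ({e\<in>E1. s e = v} - G)" using Diff_infinite_finite[OF G(1)] by blast
    then obtain f0 where "f0 \<in> {e\<in>E1. s e = v} - G" using infinite_imp_nonempty by blast
    then have f0: "f0 \<in> E1" "s f0 = v" "f0 \<notin> G" by auto
    have "\<forall>f\<in>G. \<phi> (monom [Gh f]) * \<phi> (monom [Ed f0]) = 0"
      using phi_edge_annihilates_other_ghosts f0 G(2) by blast
    moreover have "\<phi> (monom [Vx v]) * \<phi> (monom [Ed f0]) \<noteq> 0"
      using phi_vertex_edge_nonzero[OF f0(1)] f0(2) by simp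
    ultimately show ?thesis by blast
  qed
qed

section \<open>Injectivity\<close>

lemma phi_sandwich_reduct:
  assumes q: "normal_poly q" "\<phi> q = 0" and abc: "normal_triple a v b"
    and len: "\<And>c u d. (c, u, d) \<in> support_triples q \<Longrightarrow> length a \<le> length c \<and> length b \<le> length d"
  shows "\<phi> (psum (\<lambda>t. psmul (reduct_coeff q a v b t) (monom (reduct_word a v b t))) (support_triples q)) = 0"
proof -
  have v: "v \<in> E0" and a: "path a v" and b: "path b v" using abc by (auto simp: normal_triple_def)
  have L: "monom (Vx v # ghosts a) \<in> \<F>" and R: "monom (edges b @ [Vx v]) \<in> \<F>"
    using v ghosts_in_gens[OF a] edges_in_gens[OF b] by (intro cohn_free_mon; simp)+
  have "\<phi> (pmul (pmul (monom (Vx v # ghosts a)) q) (monom (edges b @ [Vx v]))) = 0"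
    using q L R hom_mul by (simp add: normal_poly_def cohn_free_pmul)
  moreover have "psum (\<lambda>t. psmul (reduct_coeff q a v b t) (monom (reduct_word a v b t))) (support_triples q) \<in> \<F>"
    using normal_poly_finite_support_triples[OF q(1)]
    by (intro cohn_free_psum cohn_free_psmul cohn_free_mon)
      (auto simp: support_triples_def dest!: reduct_word_in_gens[OF abc])
  ultimately show ?thesis
    using phi_cong[OF _ _ sandwich_reduct_cong[OF q(1) abc len]] q L R
    by (simp add: normal_poly_def cohn_free_pmul)
qed

lemma reduct_annihilator:
  assumes q: "normal_poly q" "homogeneous n q" and abc: "(a, v, b) \<in> support_triples q"
    and low: "\<forall>k\<in>ghost_lengths q. length b \<le> k"
    and high: "v \<in> X \<Longrightarrow> \<forall>k\<in>ghost_lengths q. k \<le> length b"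
  shows "\<exists>t0. (\<forall>t\<in>support_triples q. reduct_coeff q a v b t \<noteq> 0 \<longrightarrow> reduct_word a v b t \<noteq> [Vx v] \<longrightarrow>
      (\<exists>w g. reduct_word a v b t = w @ [g] \<and> w \<noteq> [] \<and> \<phi> (monom [g]) * t0 = 0)) \<and>
    \<phi> (monom [Vx v]) * t0 \<noteq> 0"
proof -
  let ?T = "support_triples q" and ?h = "reduct_word a v b" and ?c = "reduct_coeff q a v b"
  define G where "G = (\<lambda>(c, u, d). hd (drop (length b) d)) ` {t\<in>?T. ?c t \<noteq> 0 \<and> ?h t \<noteq> [Vx v]}"
  have ends: "\<exists>w. ?h t = w @ [Gh (hd (drop (length b) d))] \<and> w \<noteq> [] \<and> hd (drop (length b) d) \<in> G \<and>
      hd (drop (length b) d) \<in> E1 \<and> s (hd (drop (length b) d)) = v \<and> length b < length d"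
    if t: "t \<in> ?T" "?c t \<noteq> 0" "?h t \<noteq> [Vx v]" "t = (c, u, d)" for t c u d
  proof -
    have "hd (drop (length b) d) \<in> G" using t unfolding G_def by (intro image_eqI[of _ _ t]) auto
    with t sandwich_fits_ghost_end[of c u d a v b] support_triples_length_bounds[OF q(2) abc low, of c u d]
    show ?thesis by (auto simp: support_triples_iff reduct_word_def reduct_coeff_def split: if_splits)
  qed
  have "\<exists>t0. (\<forall>f\<in>G. \<phi> (monom [Gh f]) * t0 = 0) \<and> \<phi> (monom [Vx v]) * t0 \<noteq> 0"
  proof (rule vertex_annihilator)
    show "v \<in> E0" "finite G"
      using abc normal_poly_finite_support_triples[OF q(1)] by (simp_all add: support_triples_iff normal_triple_def G_def)
    show "G \<subseteq> {e\<in>E1. s e = v}"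
    proof
      fix f assume "f \<in> G"
      then obtain c u d where "(c, u, d) \<in> ?T" "?c (c, u, d) \<noteq> 0" "?h (c, u, d) \<noteq> [Vx v]"
        and "f = hd (drop (length b) d)" by (auto simp: G_def)
      with ends[OF this(1-3) refl] show "f \<in> {e\<in>E1. s e = v}" by blast
    qed
    show "v \<notin> X" if "G \<noteq> {}"
    proof
      assume "v \<in> X"
      obtain c u d where cud: "(c, u, d) \<in> ?T" "?c (c, u, d) \<noteq> 0" "?h (c, u, d) \<noteq> [Vx v]"
        using \<open>G \<noteq> {}\<close> by (auto simp: G_def)
      from ends[OF cud refl] have "length b < length d" by blast
      moreover have "length d \<in> ghost_lengths q" using cud(1) by (auto simp: ghost_lengths_iff)
      ultimately show False using high[OF \<open>v \<in> X\<close>] by (meson not_le)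
    qed
  qed
  then obtain t0 where t0: "\<forall>f\<in>G. \<phi> (monom [Gh f]) * t0 = 0" "\<phi> (monom [Vx v]) * t0 \<noteq> 0" by blast
  have "\<exists>w g. ?h t = w @ [g] \<and> w \<noteq> [] \<and> \<phi> (monom [g]) * t0 = 0"
    if "t \<in> ?T" "?c t \<noteq> 0" "?h t \<noteq> [Vx v]" for t
    using ends[OF that] t0(1) by (cases t) blast
  with t0(2) show ?thesis by blast
qed

lemma coefficient_vanishes:
  assumes q: "normal_poly q" "homogeneous n q" "\<phi> q = 0" and abc: "normal_triple a v b"
    and low: "\<forall>k\<in>ghost_lengths q. length b \<le> k"
    and high: "v \<in> X \<Longrightarrow> \<forall>k\<in>ghost_lengths q. k \<le> length b"
  shows "q (normal_word a v b) = 0"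
proof (rule ccontr)
  assume nz: "q (normal_word a v b) \<noteq> 0"
  let ?T = "support_triples q" and ?h = "reduct_word a v b" and ?c = "reduct_coeff q a v b"
  have fin: "finite ?T" using normal_poly_finite_support_triples[OF q(1)] .
  have abcT: "(a, v, b) \<in> ?T" using abc nz by (simp add: support_triples_iff)
  obtain t0 where ends: "\<forall>t\<in>?T. ?c t \<noteq> 0 \<longrightarrow> ?h t \<noteq> [Vx v] \<longrightarrow>
      (\<exists>w g. ?h t = w @ [g] \<and> w \<noteq> [] \<and> \<phi> (monom [g]) * t0 = 0)"
    and t0: "\<phi> (monom [Vx v]) * t0 \<noteq> 0"
    using reduct_annihilator[OF q(1,2) abcT low high] by blast
  have "(\<Sum>t\<in>{t\<in>?T. ?h t = [Vx v]}. ?c t) = 0"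
  proof (rule coefficient_vanishes_under_annihilator[OF fin _ _ _ _ t0])
    show "?h t \<noteq> [] \<and> set (?h t) \<subseteq> \<G>" if "t \<in> ?T" for t
      using that abc reduct_word_in_gens by (cases t) (auto simp: support_triples_iff)
    show "\<phi> (psum (\<lambda>t. psmul (?c t) (monom (?h t))) ?T) = 0"
      using phi_sandwich_reduct[OF q(1) q(3) abc] support_triples_length_bounds[OF q(2) abcT low] by blast
    show "v \<in> E0" using abc by (simp add: normal_triple_def)
  qed (use ends in blast)
  with reduct_vertex_coeff_sum[OF fin abcT abc] nz show False by simp
qed

lemma expand_at_raises_ghost_lengths:
  assumes q: "normal_poly q" "homogeneous n q" "\<phi> q = 0" and bounds: "ghost_lengths q \<subseteq> {m..N}"
    and mN: "m < N"
  shows "homogeneous n (expand_at q m) \<and> ghost_lengths (expand_at q m) \<subseteq> {Suc m..N}"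
proof -
  have kept: "Suc m \<le> length d" if "(c, u, d) \<in> kept_triples q m" for c u d
  proof (rule ccontr)
    assume "\<not> Suc m \<le> length d"
    moreover have "length d \<in> ghost_lengths q" using that by (auto simp: kept_triples_def ghost_lengths_iff)
    ultimately have "length d = m" "u \<notin> X" using bounds that by (auto simp: kept_triples_def)
    moreover have "normal_triple c u d" "q (normal_word c u d) \<noteq> 0"
      using that by (auto simp: kept_triples_def support_triples_iff)
    ultimately show False using coefficient_vanishes[OF q] bounds by force
  qed
  have cases: "(int (length c) - int (length d) = n) \<and> Suc m \<le> length d \<and> length d \<le> N"
    if "(c, u, d) \<in> support_triples (expand_at q m)" for c u d
    using support_triples_expand_at[OF that]
  proof (elim disjE exE conjE)
    assume "(c, u, d) \<in> kept_triples q m"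
    then show ?thesis using kept support_triples_deg[OF q(2)] bounds
      by (force simp: kept_triples_def ghost_lengths_iff)
  next
    fix a u' b e assume "(a, u', b) \<in> support_triples q" "length b = m" "c = a @ [e]" "d = b @ [e]"
    then show ?thesis using support_triples_deg[OF q(2)] mN by force
  qed
  then have "homogeneous n (expand_at q m)"
    by (intro homogeneous_if_support_triples normal_poly_expand_at q(1)) blast
  with cases show ?thesis by (force simp: ghost_lengths_iff)
qed

lemma normal_kernel_single_ghost_length:
  assumes q: "normal_poly q" "homogeneous n q" "\<phi> q = 0" and m: "ghost_lengths q \<subseteq> {m}"
  shows "q = pzero"
proof (rule ext)
  fix w
  show "q w = pzero w"
  proof (rule ccontr)
    assume "q w \<noteq> pzero w"
    then obtain a v b where abc: "(a, v, b) \<in> support_triples q" "w = normal_word a v b"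
      using q(1) by (auto simp: pzero_apply normal_poly_def normal_words_def support_triples_iff)
    have "length b \<in> ghost_lengths q" using abc by (auto simp: ghost_lengths_iff)
    then have "length b = m" using m by blast
    then have "q (normal_word a v b) = 0"
      using coefficient_vanishes[OF q] abc m by (auto simp: support_triples_iff)
    then show False using abc by (simp add: support_triples_iff)
  qed
qed

lemma normal_kernel_in_ideal_bounded:
  "normal_poly q \<Longrightarrow> homogeneous n q \<Longrightarrow> \<phi> q = 0 \<Longrightarrow> ghost_lengths q \<subseteq> {m..N} \<Longrightarrow> q \<in> \<I>"
proof (induction "N - m" arbitrary: q m)
  case 0
  then have "ghost_lengths q \<subseteq> {m}" by auto
  with 0 have "q = pzero" by (intro normal_kernel_single_ghost_length)
  then show ?case by (simp add: cohn_ideal.zero)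
next
  case (Suc k)
  then have mN: "m < N" and k: "k = N - Suc m" by simp_all
  have q': "normal_poly (expand_at q m)" and cong: "q \<approx> expand_at q m"
    using Suc.prems normal_poly_expand_at expand_at_cong by auto
  have "\<phi> (expand_at q m) = 0"
    using phi_cong[OF _ _ cong] q' Suc.prems by (simp add: normal_poly_def)
  with Suc.hyps(1)[OF k] q' expand_at_raises_ghost_lengths[OF Suc.prems(1-4) mN]
  have "expand_at q m \<in> \<I>" by blast
  then show ?case using ideal_cong[OF cong] by blast
qed

lemma normal_kernel_in_ideal:
  assumes q: "normal_poly q" "homogeneous n q" "\<phi> q = 0"
  shows "q \<in> \<I>"
proof -
  have "finite (ghost_lengths q)"
    using normal_poly_finite_support_triples[OF q(1)] by (simp add: ghost_lengths_def)
  then obtain N where "ghost_lengths q \<subseteq> {0..N}"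
    by (meson atLeastAtMost_iff finite_nat_set_iff_bounded_le subsetI zero_le)
  then show ?thesis using normal_kernel_in_ideal_bounded[OF q] by blast
qed

lemma kernel_in_ideal:
  assumes p: "p \<in> \<F>" and z: "\<phi> p = 0"
  shows "p \<in> \<I>"
proof -
  obtain p' where p': "normal_poly p'" "p \<approx> p'" using exists_normal_form[OF p] by blast
  let ?D = "wdeg ` {w. p' w \<noteq> 0}"
  have fin: "finite {w. p' w \<noteq> 0}" using p'(1) by (simp add: normal_poly_def cohn_free_iff)
  have parts: "normal_poly (hom_component d p')" for d using normal_poly_hom_component[OF p'(1)] .
  then have free: "hom_component d p' \<in> \<F>" for d by (simp add: normal_poly_def)
  have "0 = \<phi> p'" using phi_cong[OF p _ p'(2)] p'(1) z by (simp add: normal_poly_def)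
  also have "\<phi> p' = \<phi> (psum (\<lambda>d. hom_component d p') ?D)"
    using psum_hom_components[OF fin] by (rule arg_cong)
  also have "\<dots> = (\<Sum>d\<in>?D. \<phi> (hom_component d p'))" using fin free by (intro phi_psum) auto
  finally have sum0: "(\<Sum>d\<in>?D. \<phi> (hom_component d p')) = 0" ..
  have inA: "\<forall>d\<in>?D. \<phi> (hom_component d p') \<in> Agr d"
    using graded free homogeneous_hom_component by blast
  have "\<phi> (hom_component d p') = 0" if "d \<in> ?D" for d
    using graded_ring_sum_eq_0D[OF A _ inA sum0 that] fin by blast
  then have "psum (\<lambda>d. hom_component d p') ?D \<in> \<I>"
    using fin parts homogeneous_hom_component by (intro ideal_psum normal_kernel_in_ideal) auto
  then have "p' \<in> \<I>" by (subst psum_hom_components[OF fin])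
  then show ?thesis using ideal_cong[OF p'(2)] by blast
qed

end

theorem mainTheorem4:
  fixes E0 :: "'v set" and E1 :: "'e set" and s r :: "'e \<Rightarrow> 'v" and X :: "'v set"
    and Agr :: "int \<Rightarrow> 'a::ring set"
    and \<phi> :: "('k::field,'v,'e) fpoly \<Rightarrow> 'a"
  assumes graph: "cgraph E0 E1 s r"
    and X: "X \<subseteq> reg_vertices E0 E1 s"
    and A: "graded_ring Agr"
    and hom_add: "\<forall>p\<in>cohn_free E0 E1. \<forall>q\<in>cohn_free E0 E1. \<phi> (padd p q) = \<phi> p + \<phi> q"
    and hom_mul: "\<forall>p\<in>cohn_free E0 E1. \<forall>q\<in>cohn_free E0 E1. \<phi> (pmul p q) = \<phi> p * \<phi> q"
    and hom_rel: "\<forall>p\<in>cohn_ideal E0 E1 s r X. \<phi> p = 0"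
    and graded: "\<forall>n. \<forall>p\<in>cohn_free E0 E1. homogeneous n p \<longrightarrow> \<phi> p \<in> Agr n"
    and vert: "\<forall>u\<in>E0. \<phi> (mon [Vx u]) \<noteq> 0"
    and Y: "\<forall>v\<in>reg_vertices E0 E1 s - X. \<phi> (gap_elt E1 s v) \<noteq> 0"
  shows "\<forall>p\<in>cohn_free E0 E1. \<phi> p = 0 \<longrightarrow> p \<in> cohn_ideal E0 E1 s r X"
proof -
  interpret graded_cohn_hom E0 E1 s r X "TYPE('k)" Agr \<phi>
    using graph X A hom_add hom_mul hom_rel graded vert Y by unfold_locales
  show ?thesis using kernel_in_ideal by blast
qed

end
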